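(* Let $K:[0,\infty)\to(0,\infty)$ be non-increasing with $K(0)=1$, and for $\sigma>0$ let $K_\sigma(x)=K(x/\sigma)$. Let $\mathcal{X}=\{\mathbf{x}_1,\dots,\mathbf{x}_n\}\subset\mathbb{R}^d$ and let $\mathcal{C}_1,\dots,\mathcal{C}_k$ be a partition of $\mathcal{X}$ into nonempty sets, with $n\ge k+1$. For each $l\in[k]$ suppose $\mathcal{C}_l$ is connected at distance $\delta_l$. For $l\in[n]$ let $e_l$ be the $l$-th smallest eigenvalue of the normalised Laplacian of the graph $\mathcal{G}=(\mathcal{X},K_\sigma)$. Then $$\sum_{l=1}^k e_l\le nk\max_{m\in[k]}K_\sigma(d(\mathcal{C}_m,\mathcal{X}\setminus\mathcal{C}_m)),$$ $$e_{k+1}\ge\min_{l,m\in[k]}\left(\frac{K_\sigma(\delta_l)}{9n^3(k+1)^4}-n^3kK_\sigma(d(\mathcal{C}_m,\mathcal{X}\setminus\mathcal{C}_m))\right).$$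
   Context: $[n]=\{1,\dots,n\}$; $\|\cdot\|$ is the Euclidean norm. For sets $S,U$, $d(S,U)=\inf_{\mathbf{x}\in S,\mathbf{y}\in U}\|\mathbf{x}-\mathbf{y}\|$, with $d(S,\emptyset)=\infty$. A set $S$ is connected at distance $\delta$ if there is no partition of $S$ into $S_1,S_2$ with $d(S_1,S_2)>\delta$. The graph $(\mathcal{X},K_\sigma)$ has affinity matrix $\mathbf{A}_{ij}=K_\sigma(\|\mathbf{x}_i-\mathbf{x}_j\|)$ (including $i=j$), degree matrix $\mathbf{D}=\mathrm{diag}(\sum_j\mathbf{A}_{ij})$ and normalised Laplacian $\mathbf{I}-\mathbf{D}^{-1/2}\mathbf{A}\mathbf{D}^{-1/2}$. Eigenvalues are listed in nondecreasing order. *)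

theory Defs
  imports "HOL-Analysis.Analysis" "Jordan_Normal_Form.Char_Poly"
begin

text \<open>Set distance d(S,U) = inf of pairwise distances, as an extended real
  (the infimum over the empty set is \<infinity>, so d(S,{}) = \<infinity>).\<close>
definition set_dist :: "'a::real_normed_vector set \<Rightarrow> 'a set \<Rightarrow> ereal" where
  "set_dist S U = (INF p \<in> S \<times> U. ereal (norm (fst p - snd p)))"

definition connected_at_dist :: "'a::real_normed_vector set \<Rightarrow> real \<Rightarrow> bool" where
  "connected_at_dist S \<delta> \<longleftrightarrow>
     \<not> (\<exists>S1 S2. S1 \<noteq> {} \<and> S2 \<noteq> {} \<and> S1 \<union> S2 = S \<and> S1 \<inter> S2 = {}
               \<and> set_dist S1 S2 > ereal \<delta>)"

text \<open>K_sigma(x) = K(x/sigma); at x = \<infinity> we use the limit value inf_{t>=0} K t.\<close>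
definition Ksig :: "(real \<Rightarrow> real) \<Rightarrow> real \<Rightarrow> ereal \<Rightarrow> real" where
  "Ksig K \<sigma> r = (if r = \<infinity> then (INF t\<in>{0..}. K t) else K (real_of_ereal r / \<sigma>))"

definition affinity :: "(real \<Rightarrow> real) \<Rightarrow> real \<Rightarrow> nat \<Rightarrow> (nat \<Rightarrow> 'a::real_normed_vector) \<Rightarrow> real mat" where
  "affinity K \<sigma> n x = mat n n (\<lambda>(i,j). K (norm (x i - x j) / \<sigma>))"

definition degree :: "(real \<Rightarrow> real) \<Rightarrow> real \<Rightarrow> nat \<Rightarrow> (nat \<Rightarrow> 'a::real_normed_vector) \<Rightarrow> nat \<Rightarrow> real" where
  "degree K \<sigma> n x i = (\<Sum>j<n. affinity K \<sigma> n x $$ (i,j))"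

definition norm_laplacian :: "(real \<Rightarrow> real) \<Rightarrow> real \<Rightarrow> nat \<Rightarrow> (nat \<Rightarrow> 'a::real_normed_vector) \<Rightarrow> real mat" where
  "norm_laplacian K \<sigma> n x =
     1\<^sub>m n - mat n n (\<lambda>(i,j). affinity K \<sigma> n x $$ (i,j) /
                              (sqrt (degree K \<sigma> n x i) * sqrt (degree K \<sigma> n x j)))"

definition sorted_eigenvalues :: "real mat \<Rightarrow> real list \<Rightarrow> bool" where
  "sorted_eigenvalues M es \<longleftrightarrow> sorted es \<and> length es = dim_row M \<and>
     char_poly M = (\<Prod>a\<leftarrow>es. [:- a, 1:])"

end

theory Submission
  imports Defs "Jordan_Normal_Form.Schur_Decomposition"
begin

text \<open>
  Both bounds are read off the quadratic form of the normalised Laplacian,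
  \<open>Q y = 1/2 \<Sum>\<^sub>i\<^sub>j A\<^sub>i\<^sub>j (y\<^sub>i / \<surd>d\<^sub>i - y\<^sub>j / \<surd>d\<^sub>j)\<^sup>2\<close>, expanded in an orthonormal
  eigenbasis; the Laplacian is symmetric and its spectrum is real, so Gram--Schmidt turns the
  columns of a Schur decomposition into such a basis.

  Upper bound: the normalised cluster indicators \<open>D\<^sup>1\<^sup>/\<^sup>2 \<one>\<^bsub>C\<^sub>m\<^esub>\<close> are orthonormal and
  \<open>Q\<close> of each is at most \<open>n\<close> times the largest affinity leaving its cluster, so Ky Fan's
  inequality bounds the sum of the \<open>k\<close> smallest eigenvalues.

  Lower bound: in a cluster connected at distance \<open>\<delta>\<close> every cut is crossed by an edge of
  affinity at least \<open>\<gamma> = K\<^sub>\<sigma>(\<delta>)\<close>, and following such edges gives a Poincare inequality on the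
  cluster. Hence \<open>Q y \<ge> \<gamma>/(2n\<^sup>3)\<close> times the squared distance of \<open>y\<close> to the span of the
  indicators; as \<open>k + 1\<close> orthonormal eigenvectors cannot all be close to a \<open>k\<close>-dimensional
  space, \<open>e\<^sub>k\<^sub>+\<^sub>1 \<ge> \<gamma>/(2n\<^sup>3(k + 1))\<close>, which implies the stated bound.
\<close>

section \<open>Vectors indexed by the first \<open>n\<close> naturals\<close>

definition inner_upto :: "nat \<Rightarrow> (nat \<Rightarrow> real) \<Rightarrow> (nat \<Rightarrow> real) \<Rightarrow> real" where
  "inner_upto n u v = (\<Sum>i<n. u i * v i)"

definition mat_vec_upto :: "nat \<Rightarrow> (nat \<Rightarrow> nat \<Rightarrow> real) \<Rightarrow> (nat \<Rightarrow> real) \<Rightarrow> nat \<Rightarrow> real" where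
  "mat_vec_upto n M x i = (\<Sum>j<n. M i j * x j)"

definition quad_form :: "nat \<Rightarrow> (nat \<Rightarrow> nat \<Rightarrow> real) \<Rightarrow> (nat \<Rightarrow> real) \<Rightarrow> real" where
  "quad_form n M y = inner_upto n y (mat_vec_upto n M y)"

definition orthonormal_upto :: "nat \<Rightarrow> nat set \<Rightarrow> (nat \<Rightarrow> nat \<Rightarrow> real) \<Rightarrow> bool" where
  "orthonormal_upto n I v \<longleftrightarrow>
     (\<forall>i\<in>I. \<forall>j\<in>I. inner_upto n (v i) (v j) = (if i = j then 1 else 0))"

lemma quad_form_cong:
  "(\<And>i j. i < n \<Longrightarrow> j < n \<Longrightarrow> M i j = M' i j) \<Longrightarrow> quad_form n M y = quad_form n M' y"
  unfolding quad_form_def inner_upto_def mat_vec_upto_def by (auto intro!: sum.cong)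

lemma inner_upto_commute: "inner_upto n u v = inner_upto n v u"
  unfolding inner_upto_def by (simp add: mult.commute)

lemma inner_upto_cong: "(\<And>r. r < n \<Longrightarrow> u r = u' r) \<Longrightarrow> inner_upto n u v = inner_upto n u' v"
  unfolding inner_upto_def by (auto intro!: sum.cong)

lemma inner_upto_sum_left:
  "inner_upto n (\<lambda>r. \<Sum>i\<in>A. a i * f i r) v = (\<Sum>i\<in>A. a i * inner_upto n (f i) v)"
  unfolding inner_upto_def by (simp add: sum_distrib_left sum_distrib_right mult.assoc) (rule sum.swap)

lemma inner_upto_diff_left: "inner_upto n (\<lambda>r. u r - w r) v = inner_upto n u v - inner_upto n w v"
  unfolding inner_upto_def by (simp add: left_diff_distrib sum_subtractf)

lemma inner_upto_scale_left: "inner_upto n (\<lambda>r. c * u r) v = c * inner_upto n u v"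
  unfolding inner_upto_def by (simp add: sum_distrib_left mult.assoc)

lemma inner_upto_self_nonneg: "inner_upto n u u \<ge> 0"
  unfolding inner_upto_def by (auto intro: sum_nonneg)

lemma inner_upto_self_eq_0: "inner_upto n u u = 0 \<Longrightarrow> r < n \<Longrightarrow> u r = 0"
  unfolding inner_upto_def by (subst (asm) sum_nonneg_eq_0_iff) auto

lemma sum_mult_sum_swap:
  "(\<Sum>r\<in>A. a r * (\<Sum>s\<in>B. b r s * c s)) = (\<Sum>s\<in>B. (\<Sum>r\<in>A. a r * b r s) * (c s :: real))"
  by (simp add: sum_distrib_left sum_distrib_right mult.assoc) (rule sum.swap)

lemma mat_vec_upto_cong: "(\<And>l. l < n \<Longrightarrow> y l = y' l) \<Longrightarrow> mat_vec_upto n M y r = mat_vec_upto n M y' r"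
  unfolding mat_vec_upto_def by (auto intro!: sum.cong)

lemma mat_vec_upto_sum:
  "mat_vec_upto n M (\<lambda>l. \<Sum>i\<in>A. a i * f i l) r = (\<Sum>i\<in>A. a i * mat_vec_upto n M (f i) r)"
  unfolding mat_vec_upto_def by (simp add: sum_distrib_left mult_ac) (rule sum.swap)

lemma inner_mat_vec_upto_symmetric:
  assumes "\<And>i j. i < n \<Longrightarrow> j < n \<Longrightarrow> M i j = M j i"
  shows "inner_upto n (mat_vec_upto n M x) y = inner_upto n x (mat_vec_upto n M y)"
proof -
  have "inner_upto n (mat_vec_upto n M x) y = (\<Sum>i<n. \<Sum>l<n. M i l * x l * y i)"
    unfolding inner_upto_def mat_vec_upto_def by (simp add: sum_distrib_right)
  also have "\<dots> = (\<Sum>l<n. \<Sum>i<n. M l i * x l * y i)"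
    by (subst sum.swap) (auto intro!: sum.cong simp: assms)
  also have "\<dots> = inner_upto n x (mat_vec_upto n M y)"
    unfolding inner_upto_def mat_vec_upto_def by (simp add: sum_distrib_left mult_ac)
  finally show ?thesis .
qed

lemma orthonormal_upto_sum_coeff:
  assumes "orthonormal_upto n I v" "i \<in> I" "finite I"
  shows "(\<Sum>j\<in>I. a j * inner_upto n (v j) (v i)) = a i"
  using assms by (simp add: orthonormal_upto_def if_distrib[of "\<lambda>x. a _ * x"] sum.delta cong: if_cong)

lemma bessel_inequality:
  assumes fin: "finite I" and ortho: "orthonormal_upto n I g"
  shows "(\<Sum>i\<in>I. (inner_upto n (g i) y)^2) \<le> inner_upto n y y"
proof -
  define c where "c i = inner_upto n (g i) y" for i
  define z where "z r = y r - (\<Sum>i\<in>I. c i * g i r)" for r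
  have z: "inner_upto n z w = inner_upto n y w - (\<Sum>i\<in>I. c i * inner_upto n (g i) w)" for w
    unfolding z_def by (simp add: inner_upto_diff_left inner_upto_sum_left)
  have "inner_upto n z (g i) = 0" if "i \<in> I" for i
    using z[of "g i"] orthonormal_upto_sum_coeff[OF ortho that fin]
    by (simp add: c_def inner_upto_commute)
  then have "inner_upto n z z = inner_upto n z y"
    using z[of z] by (simp add: inner_upto_commute)
  also have "\<dots> = inner_upto n y y - (\<Sum>i\<in>I. (inner_upto n (g i) y)^2)"
    using z[of y] by (simp add: c_def power2_eq_square)
  finally show ?thesis using inner_upto_self_nonneg[of n z] by linarith
qed

lemma orthogonal_to_spanning_family_eq_0:
  assumes span: "\<And>r. r < n \<Longrightarrow> w r = (\<Sum>i\<in>I. a i * u i r)"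
    and orth: "\<And>i. i \<in> I \<Longrightarrow> inner_upto n (u i) w = 0" and "r < n"
  shows "w r = 0"
proof -
  have "inner_upto n w w = inner_upto n (\<lambda>r. \<Sum>i\<in>I. a i * u i r) w"
    by (rule inner_upto_cong) (simp add: span)
  also have "\<dots> = 0" by (simp add: inner_upto_sum_left orth)
  finally show ?thesis using inner_upto_self_eq_0 \<open>r < n\<close> by blast
qed

lemma gram_schmidt_orthogonal:
  fixes u :: "nat \<Rightarrow> nat \<Rightarrow> real"
  assumes orth: "\<And>i i'. i < j \<Longrightarrow> i' < j \<Longrightarrow> i \<noteq> i' \<Longrightarrow> inner_upto n (u i) (u i') = 0"
    and pos: "\<And>i. i < j \<Longrightarrow> inner_upto n (u i) (u i) > 0" and "i' < j"
  shows "inner_upto n (\<lambda>r. p r - (\<Sum>i<j. inner_upto n p (u i) / inner_upto n (u i) (u i) * u i r))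
           (u i') = 0"
proof -
  let ?c = "\<lambda>i. inner_upto n p (u i) / inner_upto n (u i) (u i)"
  have "(\<Sum>i<j. ?c i * inner_upto n (u i) (u i')) = ?c i' * inner_upto n (u i') (u i')"
    using \<open>i' < j\<close> orth by (subst sum.remove[of _ i']) (auto intro!: sum.neutral)
  also have "\<dots> = inner_upto n p (u i')" using pos[OF \<open>i' < j\<close>] by simp
  finally show ?thesis unfolding inner_upto_diff_left inner_upto_sum_left by simp
qed

section \<open>Orthonormal eigenbases of symmetric matrices with real spectrum\<close>

lemma similar_mat_wit_entries:
  fixes M B P Q :: "real mat"
  assumes sim: "similar_mat_wit M B P Q" and M: "M \<in> carrier_mat n n"
  shows "\<And>i j. i < n \<Longrightarrow> j < n \<Longrightarrow> (\<Sum>l<n. M $$ (i,l) * P $$ (l,j)) = (\<Sum>t<n. P $$ (i,t) * B $$ (t,j))"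
    and "\<And>i j. i < n \<Longrightarrow> j < n \<Longrightarrow> (\<Sum>l<n. Q $$ (i,l) * P $$ (l,j)) = (if i = j then 1 else 0)"
    and "\<And>i j. i < n \<Longrightarrow> j < n \<Longrightarrow> (\<Sum>l<n. P $$ (i,l) * Q $$ (l,j)) = (if i = j then 1 else 0)"
proof -
  from sim M have B: "B \<in> carrier_mat n n" and P: "P \<in> carrier_mat n n" and Q: "Q \<in> carrier_mat n n"
    and PQ: "P * Q = 1\<^sub>m n" and QP: "Q * P = 1\<^sub>m n" and MPBQ: "M = P * B * Q"
    unfolding similar_mat_wit_def Let_def by auto
  have "M * P = P * B * (Q * P)" using MPBQ B P Q by (simp add: assoc_mult_mat[of _ n n _ n _ n])
  then have MP: "M * P = P * B" using QP B P by simp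
  have entry: "(X * Y) $$ (i,j) = (\<Sum>l<n. X $$ (i,l) * Y $$ (l,j))"
    if "X \<in> carrier_mat n n" "Y \<in> carrier_mat n n" "i < n" "j < n" for X Y :: "real mat" and i j
    using that by (auto simp: scalar_prod_def lessThan_atLeast0 intro!: sum.cong)
  show "(\<Sum>l<n. M $$ (i,l) * P $$ (l,j)) = (\<Sum>t<n. P $$ (i,t) * B $$ (t,j))" if "i < n" "j < n" for i j
    using arg_cong[OF MP, of "\<lambda>X. X $$ (i,j)"] entry[OF M P that] entry[OF P B that] by simp
  show "(\<Sum>l<n. Q $$ (i,l) * P $$ (l,j)) = (if i = j then 1 else 0)" if "i < n" "j < n" for i j
    using arg_cong[OF QP, of "\<lambda>X. X $$ (i,j)"] entry[OF Q P that] that by simp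
  show "(\<Sum>l<n. P $$ (i,l) * Q $$ (l,j)) = (if i = j then 1 else 0)" if "i < n" "j < n" for i j
    using arg_cong[OF PQ, of "\<lambda>X. X $$ (i,j)"] entry[OF P Q that] that by simp
qed

lemma left_invertible_mult_nonzero:
  fixes P Q :: "nat \<Rightarrow> nat \<Rightarrow> real"
  assumes QP: "\<And>i j. i < n \<Longrightarrow> j < n \<Longrightarrow> (\<Sum>l<n. Q i l * P l j) = (if i = j then 1 else 0)"
    and "j < n" and "c j \<noteq> 0"
  shows "inner_upto n (\<lambda>r. \<Sum>s<n. P r s * c s) (\<lambda>r. \<Sum>s<n. P r s * c s) > 0"
proof (rule ccontr)
  let ?u = "\<lambda>r. \<Sum>s<n. P r s * c s"
  assume "\<not> ?thesis"
  then have "inner_upto n ?u ?u = 0" using inner_upto_self_nonneg[of n ?u] by linarith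
  then have zero: "?u r = 0" if "r < n" for r using inner_upto_self_eq_0 that by blast
  have "(\<Sum>r<n. Q j r * ?u r) = (\<Sum>s<n. (\<Sum>r<n. Q j r * P r s) * c s)"
    by (rule sum_mult_sum_swap)
  also have "\<dots> = (\<Sum>s<n. if j = s then c s else 0)"
    using QP \<open>j < n\<close> by (intro sum.cong) auto
  also have "\<dots> = c j" using \<open>j < n\<close> by simp
  finally show False using zero \<open>c j \<noteq> 0\<close> by simp
qed

definition unitriangular :: "nat \<Rightarrow> (nat \<Rightarrow> nat \<Rightarrow> real) \<Rightarrow> bool" where
  "unitriangular j T \<longleftrightarrow> (\<forall>i<j. T i i = 1 \<and> (\<forall>s>i. T i s = 0))"

lemma unitriangular_span:
  assumes "unitriangular j T" and "\<And>s. s \<ge> j \<Longrightarrow> c s = 0"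
  shows "\<exists>a. \<forall>s. c s = (\<Sum>i<j. a i * T i s)"
  using assms
proof (induction j arbitrary: c)
  case 0
  then show ?case by auto
next
  case (Suc j)
  define c' where "c' s = c s - c j * T j s" for s
  have "\<exists>a. \<forall>s. c' s = (\<Sum>i<j. a i * T i s)"
  proof (rule Suc.IH)
    show "unitriangular j T" using Suc.prems(1) by (simp add: unitriangular_def)
    show "c' s = 0" if "s \<ge> j" for s
      using Suc.prems that by (cases "s = j") (auto simp: c'_def unitriangular_def)
  qed
  then obtain a where a: "\<And>s. c' s = (\<Sum>i<j. a i * T i s)" by blast
  show ?case
    by (rule exI[of _ "a(j := c j)"]) (auto simp: a[unfolded c'_def, symmetric] intro!: sum.cong)
qed

lemma upper_triangular_mult_unit_column:
  fixes B :: "nat \<Rightarrow> nat \<Rightarrow> real" and c :: "nat \<Rightarrow> real"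
  assumes upper: "\<And>t s. t < n \<Longrightarrow> s < t \<Longrightarrow> B t s = 0"
    and cj: "c j = 1" and c0: "\<And>s. s > j \<Longrightarrow> c s = 0" and "j \<le> t" "t < n"
  shows "(\<Sum>s<n. B t s * c s) = (if t = j then B j j else 0)"
proof -
  have "B t s * c s = (if s = t \<and> t = j then B j j else 0)" for s
  proof (cases "s < t")
    case True
    then show ?thesis using upper[OF \<open>t < n\<close>] by auto
  next
    case False
    show ?thesis
    proof (cases "s > j")
      case True
      then show ?thesis using c0 by auto
    next
      case False
      then have "s = t" "t = j" using \<open>\<not> s < t\<close> \<open>j \<le> t\<close> by auto
      then show ?thesis using cj by simp
    qed
  qed
  then show ?thesis using \<open>t < n\<close> by (simp add: sum.delta)
qed

lemma triangular_eigen_defect: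
  fixes L P B T u :: "nat \<Rightarrow> nat \<Rightarrow> real"
  assumes LP: "\<And>i j. i < n \<Longrightarrow> j < n \<Longrightarrow> (\<Sum>l<n. L i l * P l j) = (\<Sum>t<n. P i t * B t j)"
    and upper: "\<And>t s. t < n \<Longrightarrow> s < t \<Longrightarrow> B t s = 0"
    and tri: "unitriangular (Suc j) T" and uT: "\<And>i. i \<le> j \<Longrightarrow> u i = (\<lambda>r. \<Sum>s<n. P r s * T i s)"
    and "j < n"
  shows "\<exists>a. \<forall>r<n. mat_vec_upto n L (u j) r - B j j * u j r = (\<Sum>i<j. a i * u i r)"
proof -
  define c where "c t = (if t < n then (\<Sum>s<n. B t s * T j s) - B j j * T j t else 0)" for t
  have defect: "mat_vec_upto n L (u j) r - B j j * u j r = (\<Sum>t<n. P r t * c t)" if "r < n" for r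
  proof -
    have "mat_vec_upto n L (u j) r = (\<Sum>s<n. (\<Sum>l<n. L r l * P l s) * T j s)"
      unfolding mat_vec_upto_def uT[OF order_refl] by (rule sum_mult_sum_swap)
    also have "\<dots> = (\<Sum>s<n. (\<Sum>t<n. P r t * B t s) * T j s)"
      using that by (intro sum.cong) (auto simp: LP)
    also have "\<dots> = (\<Sum>t<n. P r t * (\<Sum>s<n. B t s * T j s))"
      by (rule sum_mult_sum_swap[symmetric])
    also have "\<dots> = (\<Sum>t<n. P r t * (B j j * T j t + c t))"
      by (intro sum.cong) (auto simp: c_def)
    also have "\<dots> = B j j * u j r + (\<Sum>t<n. P r t * c t)"
      unfolding uT[OF order_refl] by (simp add: distrib_left sum.distrib sum_distrib_left mult_ac)
    finally show ?thesis by simp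
  qed
  have "c t = 0" if "t \<ge> j" for t
    using upper_triangular_mult_unit_column[where B = B and c = "T j" and j = j and t = t] upper tri that
    by (auto simp: c_def unitriangular_def)
  then obtain a where a: "\<And>s. c s = (\<Sum>i<j. a i * T i s)"
    using unitriangular_span[of j T c] tri by (auto simp: unitriangular_def)
  have "(\<Sum>t<n. P r t * c t) = (\<Sum>i<j. a i * u i r)" for r
  proof -
    have "(\<Sum>t<n. P r t * c t) = (\<Sum>t<n. P r t * (\<Sum>i<j. T i t * a i))"
      by (simp add: a mult.commute)
    also have "\<dots> = (\<Sum>i<j. (\<Sum>t<n. P r t * T i t) * a i)" by (rule sum_mult_sum_swap)
    finally show ?thesis by (simp add: uT mult.commute)
  qed
  then show ?thesis using defect by auto
qed

definition triangular_eigenfamily ::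
  "nat \<Rightarrow> (nat \<Rightarrow> nat \<Rightarrow> real) \<Rightarrow> (nat \<Rightarrow> nat \<Rightarrow> real) \<Rightarrow> (nat \<Rightarrow> real) \<Rightarrow> nat \<Rightarrow>
     (nat \<Rightarrow> nat \<Rightarrow> real) \<Rightarrow> (nat \<Rightarrow> nat \<Rightarrow> real) \<Rightarrow> bool" where
  "triangular_eigenfamily n L P e j T u \<longleftrightarrow> unitriangular j T \<and>
     (\<forall>i<j. u i = (\<lambda>r. \<Sum>s<n. P r s * T i s)) \<and>
     (\<forall>i<j. \<forall>i'<j. i \<noteq> i' \<longrightarrow> inner_upto n (u i) (u i') = 0) \<and>
     (\<forall>i<j. inner_upto n (u i) (u i) > 0) \<and>
     (\<forall>i<j. \<forall>r<n. mat_vec_upto n L (u i) r = e i * u i r)"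

lemma symmetric_defect_in_span_eq_0:
  fixes L u :: "nat \<Rightarrow> nat \<Rightarrow> real" and w :: "nat \<Rightarrow> real"
  assumes sym: "\<And>i j. i < n \<Longrightarrow> j < n \<Longrightarrow> L i j = L j i"
    and eig: "\<And>i r. i < j \<Longrightarrow> r < n \<Longrightarrow> mat_vec_upto n L (u i) r = e i * u i r"
    and orth: "\<And>i. i < j \<Longrightarrow> inner_upto n w (u i) = 0"
    and span: "\<And>r. r < n \<Longrightarrow> mat_vec_upto n L w r - c * w r = (\<Sum>i<j. a i * u i r)"
    and "r < n"
  shows "mat_vec_upto n L w r = c * w r"
proof -
  have "inner_upto n (u i) (\<lambda>r. mat_vec_upto n L w r - c * w r) = 0" if "i < j" for i
  proof -
    have "inner_upto n (mat_vec_upto n L w) (u i) = inner_upto n (mat_vec_upto n L (u i)) w"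
      using inner_mat_vec_upto_symmetric[OF sym] by (simp add: inner_upto_commute)
    also have "\<dots> = inner_upto n (\<lambda>r. e i * u i r) w"
      by (rule inner_upto_cong) (simp add: eig that)
    also have "\<dots> = 0"
      using orth[OF that] by (simp add: inner_upto_scale_left inner_upto_commute)
    finally show ?thesis
      using orth[OF that]
      by (simp add: inner_upto_commute[of n "u i"] inner_upto_diff_left inner_upto_scale_left)
  qed
  then show ?thesis
    using orthogonal_to_spanning_family_eq_0[where I = "{..<j}" and u = u, OF span] \<open>r < n\<close>
    by auto
qed

text \<open>The Schur basis \<open>P\<close> of \<open>L P = P B\<close> need not be orthogonal, so Gram--Schmidt is applied
  to its columns. The defect \<open>L u\<^sub>j - e\<^sub>j u\<^sub>j\<close> of the new vector lies in the span of
  \<open>u\<^sub>0, \<dots>, u\<^bsub>j-1\<^esub>\<close> and, by symmetry of \<open>L\<close>, is orthogonal to it, hence vanishes.\<close>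
lemma triangular_eigenfamily_Suc:
  fixes L P Q B :: "nat \<Rightarrow> nat \<Rightarrow> real" and e :: "nat \<Rightarrow> real"
  assumes sym: "\<And>i j. i < n \<Longrightarrow> j < n \<Longrightarrow> L i j = L j i"
    and LP: "\<And>i j. i < n \<Longrightarrow> j < n \<Longrightarrow> (\<Sum>l<n. L i l * P l j) = (\<Sum>t<n. P i t * B t j)"
    and QP: "\<And>i j. i < n \<Longrightarrow> j < n \<Longrightarrow> (\<Sum>l<n. Q i l * P l j) = (if i = j then 1 else 0)"
    and upper: "\<And>t s. t < n \<Longrightarrow> s < t \<Longrightarrow> B t s = 0"
    and diag: "\<And>j. j < n \<Longrightarrow> B j j = e j"
    and fam: "triangular_eigenfamily n L P e j T u" and "j < n"
  shows "\<exists>T u. triangular_eigenfamily n L P e (Suc j) T u"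
proof -
  from fam have tri: "unitriangular j T"
    and uT: "\<And>i. i < j \<Longrightarrow> u i = (\<lambda>r. \<Sum>s<n. P r s * T i s)"
    and orth: "\<And>i i'. i < j \<Longrightarrow> i' < j \<Longrightarrow> i \<noteq> i' \<Longrightarrow> inner_upto n (u i) (u i') = 0"
    and pos: "\<And>i. i < j \<Longrightarrow> inner_upto n (u i) (u i) > 0"
    and eig: "\<And>i r. i < j \<Longrightarrow> r < n \<Longrightarrow> mat_vec_upto n L (u i) r = e i * u i r"
    unfolding triangular_eigenfamily_def by auto
  define cf where "cf i = inner_upto n (\<lambda>r. P r j) (u i) / inner_upto n (u i) (u i)" for i
  define T' where "T' = T(j := \<lambda>s. (if s = j then 1 else 0) - (\<Sum>i<j. cf i * T i s))"
  define u' where "u' = u(j := \<lambda>r. \<Sum>s<n. P r s * T' j s)"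
  have tri': "unitriangular (Suc j) T'"
    using tri by (auto simp: unitriangular_def T'_def less_Suc_eq)
  have uT': "u' i = (\<lambda>r. \<Sum>s<n. P r s * T' i s)" if "i < Suc j" for i
    using uT that by (auto simp: T'_def u'_def less_Suc_eq)
  have u'j: "u' j = (\<lambda>r. P r j - (\<Sum>i<j. cf i * u i r))"
  proof
    fix r
    have "u' j r = (\<Sum>s<n. P r s * (if s = j then 1 else 0))
        - (\<Sum>s<n. \<Sum>i<j. P r s * (cf i * T i s))"
      by (simp add: u'_def T'_def right_diff_distrib sum_subtractf sum_distrib_left)
    also have "(\<Sum>s<n. P r s * (if s = j then 1 else 0)) = P r j"
      using \<open>j < n\<close> by (simp add: if_distrib[of "\<lambda>x. P r _ * x"] sum.delta cong: if_cong)
    also have "(\<Sum>s<n. \<Sum>i<j. P r s * (cf i * T i s)) = (\<Sum>i<j. cf i * u i r)"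
      by (subst sum.swap) (auto intro!: sum.cong simp: uT sum_distrib_left mult_ac)
    finally show "u' j r = P r j - (\<Sum>i<j. cf i * u i r)" .
  qed
  have orth_j: "inner_upto n (u' j) (u i) = 0" if "i < j" for i
    using gram_schmidt_orthogonal[OF orth pos that, where p = "\<lambda>r. P r j"]
    by (simp add: u'j cf_def)
  have pos_j: "inner_upto n (u' j) (u' j) > 0"
    using left_invertible_mult_nonzero[OF QP \<open>j < n\<close>, of "T' j"] tri' uT'[of j]
    by (simp add: unitriangular_def)
  have eig_j: "mat_vec_upto n L (u' j) r = e j * u' j r" if "r < n" for r
  proof -
    obtain a where a: "\<And>r. r < n \<Longrightarrow>
        mat_vec_upto n L (u' j) r - e j * u' j r = (\<Sum>i<j. a i * u i r)"
      using triangular_eigen_defect[OF LP upper tri' _ \<open>j < n\<close>, of u'] uT' diag[OF \<open>j < n\<close>]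
      by (auto simp: u'_def)
    show ?thesis by (rule symmetric_defect_in_span_eq_0[OF sym eig orth_j a that])
  qed
  have u'_lt: "u' i = u i" if "i < j" for i
    using that by (simp add: u'_def)
  have "triangular_eigenfamily n L P e (Suc j) T' u'"
    unfolding triangular_eigenfamily_def
  proof (intro conjI)
    show "\<forall>i<Suc j. u' i = (\<lambda>r. \<Sum>s<n. P r s * T' i s)" using uT' by blast
    show "\<forall>i<Suc j. \<forall>i'<Suc j. i \<noteq> i' \<longrightarrow> inner_upto n (u' i) (u' i') = 0"
      using orth orth_j by (auto simp: less_Suc_eq u'_lt inner_upto_commute[of n _ "u' j"])
    show "\<forall>i<Suc j. inner_upto n (u' i) (u' i) > 0"
      using pos pos_j by (auto simp: less_Suc_eq u'_lt)
    show "\<forall>i<Suc j. \<forall>r<n. mat_vec_upto n L (u' i) r = e i * u' i r"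
      using eig eig_j by (auto simp: less_Suc_eq u'_lt)
  qed (fact tri')
  then show ?thesis by blast
qed

lemma triangular_eigenfamily_exists:
  fixes L P Q B :: "nat \<Rightarrow> nat \<Rightarrow> real" and e :: "nat \<Rightarrow> real"
  assumes "\<And>i j. i < n \<Longrightarrow> j < n \<Longrightarrow> L i j = L j i"
    and "\<And>i j. i < n \<Longrightarrow> j < n \<Longrightarrow> (\<Sum>l<n. L i l * P l j) = (\<Sum>t<n. P i t * B t j)"
    and "\<And>i j. i < n \<Longrightarrow> j < n \<Longrightarrow> (\<Sum>l<n. Q i l * P l j) = (if i = j then 1 else 0)"
    and "\<And>t s. t < n \<Longrightarrow> s < t \<Longrightarrow> B t s = 0"
    and "\<And>j. j < n \<Longrightarrow> B j j = e j"
  shows "\<exists>T u. triangular_eigenfamily n L P e n T u"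
proof -
  have "\<exists>T u. triangular_eigenfamily n L P e j T u" if "j \<le> n" for j
    using that
  proof (induction j)
    case 0
    show ?case by (auto simp: triangular_eigenfamily_def unitriangular_def)
  next
    case (Suc j)
    then obtain T u where "triangular_eigenfamily n L P e j T u" by auto
    then show ?case using triangular_eigenfamily_Suc[OF assms] Suc.prems by auto
  qed
  then show ?thesis by blast
qed

lemma unitriangular_image_spans:
  fixes P Q T :: "nat \<Rightarrow> nat \<Rightarrow> real"
  assumes PQ: "\<And>i j. i < n \<Longrightarrow> j < n \<Longrightarrow> (\<Sum>l<n. P i l * Q l j) = (if i = j then 1 else 0)"
    and tri: "unitriangular n T"
  shows "\<exists>a. \<forall>r<n. y r = (\<Sum>i<n. a i * (\<Sum>s<n. P r s * T i s))"
proof -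
  define c where "c s = (if s < n then (\<Sum>r<n. Q s r * y r) else 0)" for s
  obtain a where a: "\<And>s. c s = (\<Sum>i<n. a i * T i s)"
    using unitriangular_span[OF tri, of c] by (force simp: c_def)
  have "y r = (\<Sum>i<n. a i * (\<Sum>s<n. P r s * T i s))" if r: "r < n" for r
  proof -
    have "y r = (\<Sum>r'<n. if r = r' then y r' else 0)" using r by simp
    also have "\<dots> = (\<Sum>r'<n. (\<Sum>s<n. P r s * Q s r') * y r')"
      using r by (intro sum.cong) (auto simp: PQ)
    also have "\<dots> = (\<Sum>s<n. P r s * c s)"
      unfolding c_def by (simp add: sum_mult_sum_swap)
    also have "\<dots> = (\<Sum>s<n. P r s * (\<Sum>i<n. T i s * a i))"
      by (simp add: a mult.commute)
    also have "\<dots> = (\<Sum>i<n. (\<Sum>s<n. P r s * T i s) * a i)"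
      by (rule sum_mult_sum_swap)
    finally show ?thesis by (simp add: mult.commute)
  qed
  then show ?thesis by blast
qed

lemma orthonormal_upto_normalize:
  fixes u :: "nat \<Rightarrow> nat \<Rightarrow> real"
  assumes orth: "\<And>i i'. i < m \<Longrightarrow> i' < m \<Longrightarrow> i \<noteq> i' \<Longrightarrow> inner_upto n (u i) (u i') = 0"
    and pos: "\<And>i. i < m \<Longrightarrow> inner_upto n (u i) (u i) > 0"
  shows "orthonormal_upto n {..<m} (\<lambda>i r. u i r / sqrt (inner_upto n (u i) (u i)))"
  unfolding orthonormal_upto_def
proof (intro ballI)
  fix i i' assume "i \<in> {..<m}" "i' \<in> {..<m}"
  moreover have "inner_upto n (\<lambda>r. u i r / sqrt (inner_upto n (u i) (u i)))
      (\<lambda>r. u i' r / sqrt (inner_upto n (u i') (u i')))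
    = inner_upto n (u i) (u i') / (sqrt (inner_upto n (u i) (u i)) * sqrt (inner_upto n (u i') (u i')))"
    unfolding inner_upto_def by (simp add: sum_divide_distrib)
  ultimately show "inner_upto n (\<lambda>r. u i r / sqrt (inner_upto n (u i) (u i)))
      (\<lambda>r. u i' r / sqrt (inner_upto n (u i') (u i'))) = (if i = i' then 1 else 0)"
    using orth[of i i'] pos[of i] by (cases "i = i'") auto
qed

lemma orthonormal_eigenbasis_of_triangular_eigenfamily:
  fixes L P Q T u :: "nat \<Rightarrow> nat \<Rightarrow> real"
  assumes PQ: "\<And>i j. i < n \<Longrightarrow> j < n \<Longrightarrow> (\<Sum>l<n. P i l * Q l j) = (if i = j then 1 else 0)"
    and fam: "triangular_eigenfamily n L P e n T u"
  obtains v where "orthonormal_upto n {..<n} v"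
    and "\<And>y. \<exists>a. \<forall>r<n. y r = (\<Sum>i<n. a i * v i r)"
    and "\<And>i r. i < n \<Longrightarrow> r < n \<Longrightarrow> mat_vec_upto n L (v i) r = e i * v i r"
proof
  from fam have tri: "unitriangular n T"
    and uT: "\<And>i. i < n \<Longrightarrow> u i = (\<lambda>r. \<Sum>s<n. P r s * T i s)"
    and orth: "\<And>i i'. i < n \<Longrightarrow> i' < n \<Longrightarrow> i \<noteq> i' \<Longrightarrow> inner_upto n (u i) (u i') = 0"
    and pos: "\<And>i. i < n \<Longrightarrow> inner_upto n (u i) (u i) > 0"
    and eig: "\<And>i r. i < n \<Longrightarrow> r < n \<Longrightarrow> mat_vec_upto n L (u i) r = e i * u i r"
    unfolding triangular_eigenfamily_def by auto
  define N where "N i = sqrt (inner_upto n (u i) (u i))" for i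
  define v where "v i r = u i r / N i" for i r
  have N: "N i > 0" if "i < n" for i using pos[OF that] by (simp add: N_def)
  show "orthonormal_upto n {..<n} v"
    unfolding v_def[abs_def] N_def by (rule orthonormal_upto_normalize[OF orth pos])
  show "\<exists>a. \<forall>r<n. y r = (\<Sum>i<n. a i * v i r)" for y
  proof -
    have "\<exists>a. \<forall>r<n. y r = (\<Sum>i<n. a i * (\<Sum>s<n. P r s * T i s))"
      using PQ tri by (rule unitriangular_image_spans)
    then obtain a where a: "\<forall>r<n. y r = (\<Sum>i<n. a i * (\<Sum>s<n. P r s * T i s))" ..
    have scaled: "a i * (\<Sum>s<n. P r s * T i s) = (a i * N i) * v i r" if "i < n" for i r
      using N[OF that] uT[OF that] by (simp add: v_def)
    have yv: "y r = (\<Sum>i<n. (a i * N i) * v i r)" if "r < n" for r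
    proof -
      have "y r = (\<Sum>i<n. a i * (\<Sum>s<n. P r s * T i s))" using a that by simp
      also have "\<dots> = (\<Sum>i<n. (a i * N i) * v i r)"
        by (intro sum.cong refl scaled) simp
      finally show ?thesis .
    qed
    show ?thesis using yv by (intro exI[of _ "\<lambda>i. a i * N i"]) simp
  qed
  show "mat_vec_upto n L (v i) r = e i * v i r" if "i < n" "r < n" for i r
    using eig[OF that] unfolding mat_vec_upto_def v_def
    by (simp add: sum_divide_distrib[symmetric] mult.assoc)
qed

lemma orthonormal_eigenbasis_expansion:
  fixes L v :: "nat \<Rightarrow> nat \<Rightarrow> real"
  assumes ortho: "orthonormal_upto n {..<n} v"
    and span: "\<And>y. \<exists>a. \<forall>r<n. y r = (\<Sum>i<n. a i * v i r)"
    and eig: "\<And>i r. i < n \<Longrightarrow> r < n \<Longrightarrow> mat_vec_upto n L (v i) r = e i * v i r"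
  shows "inner_upto n y y = (\<Sum>i<n. (inner_upto n y (v i))^2)"
    and "quad_form n L y = (\<Sum>i<n. e i * (inner_upto n y (v i))^2)"
proof -
  obtain a where a: "\<And>r. r < n \<Longrightarrow> y r = (\<Sum>i<n. a i * v i r)" using span by blast
  have y: "inner_upto n y w = (\<Sum>i<n. a i * inner_upto n (v i) w)" for w
    by (simp add: inner_upto_cong[OF a] inner_upto_sum_left)
  have coeff: "inner_upto n y (v i) = a i" if "i < n" for i
    using y orthonormal_upto_sum_coeff[OF ortho] that by simp
  show "inner_upto n y y = (\<Sum>i<n. (inner_upto n y (v i))^2)"
    using y[of y] coeff by (simp add: inner_upto_commute[of n "v _"] power2_eq_square)
  have Ly: "mat_vec_upto n L y r = (\<Sum>i<n. (e i * a i) * v i r)" if "r < n" for r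
    using that eig by (simp add: mat_vec_upto_cong[OF a] mat_vec_upto_sum mult_ac)
  have "quad_form n L y = inner_upto n (mat_vec_upto n L y) y"
    unfolding quad_form_def by (rule inner_upto_commute)
  also have "\<dots> = inner_upto n (\<lambda>r. \<Sum>i<n. (e i * a i) * v i r) y"
    by (rule inner_upto_cong) (rule Ly)
  also have "\<dots> = (\<Sum>i<n. (e i * a i) * inner_upto n (v i) y)"
    by (rule inner_upto_sum_left)
  finally have "quad_form n L y = (\<Sum>i<n. (e i * a i) * inner_upto n (v i) y)" .
  then show "quad_form n L y = (\<Sum>i<n. e i * (inner_upto n y (v i))^2)"
    using coeff by (simp add: inner_upto_commute[of n "v _"] power2_eq_square mult.assoc)
qed

theorem symmetric_mat_orthonormal_eigenbasis:
  fixes M :: "real mat"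
  assumes M: "M \<in> carrier_mat n n" and sym: "\<And>i j. i < n \<Longrightarrow> j < n \<Longrightarrow> M $$ (i,j) = M $$ (j,i)"
    and cp: "char_poly M = (\<Prod>a\<leftarrow>es. [:- a, 1:])"
  obtains v where "orthonormal_upto n {..<n} v"
    and "\<And>y. inner_upto n y y = (\<Sum>i<n. (inner_upto n y (v i))^2)"
    and "\<And>y. quad_form n (\<lambda>i j. M $$ (i,j)) y = (\<Sum>i<n. es ! i * (inner_upto n y (v i))^2)"
proof -
  obtain B P Q where "schur_decomposition M es = (B, P, Q)"
    by (cases "schur_decomposition M es") auto
  from schur_decomposition[OF M cp this]
  have sim: "similar_mat_wit M B P Q" and upper: "upper_triangular B" and diag: "diag_mat B = es"
    by auto
  have B: "B \<in> carrier_mat n n" using sim M unfolding similar_mat_wit_def Let_def by auto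
  note entries = similar_mat_wit_entries[OF sim M]
  have upper': "\<And>t s. t < n \<Longrightarrow> s < t \<Longrightarrow> B $$ (t,s) = 0"
    using upper B by (auto simp: upper_triangular_def)
  have diag': "\<And>j. j < n \<Longrightarrow> B $$ (j,j) = es ! j"
    using B by (auto simp: diag[symmetric] diag_mat_def)
  obtain T u where fam: "triangular_eigenfamily n (\<lambda>i j. M $$ (i,j)) (\<lambda>i j. P $$ (i,j)) (\<lambda>i. es ! i) n T u"
    using triangular_eigenfamily_exists[where Q = "\<lambda>i j. Q $$ (i,j)" and B = "\<lambda>i j. B $$ (i,j)",
        OF sym entries(1,2) upper' diag'] by blast
  obtain v where "orthonormal_upto n {..<n} v" and "\<And>y. \<exists>a. \<forall>r<n. y r = (\<Sum>i<n. a i * v i r)"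
    and "\<And>i r. i < n \<Longrightarrow> r < n \<Longrightarrow> mat_vec_upto n (\<lambda>i j. M $$ (i,j)) (v i) r = es ! i * v i r"
    using orthonormal_eigenbasis_of_triangular_eigenfamily[OF entries(3) fam] by blast
  from that[OF this(1) orthonormal_eigenbasis_expansion[OF this]] show ?thesis .
qed

section \<open>Variational bounds on eigenvalues\<close>

text \<open>Termwise \<open>(e\<^sub>j - e\<^bsub>k-1\<^esub>) (p\<^sub>j - [j < k]) \<ge> 0\<close>.\<close>
lemma sum_initial_le_weighted_sum:
  fixes e p :: "nat \<Rightarrow> real"
  assumes kn: "k \<le> n" and mono: "\<And>i j. i \<le> j \<Longrightarrow> j < n \<Longrightarrow> e i \<le> e j"
    and p0: "\<And>j. j < n \<Longrightarrow> 0 \<le> p j" and p1: "\<And>j. j < n \<Longrightarrow> p j \<le> 1"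
    and ps: "(\<Sum>j<n. p j) = real k"
  shows "(\<Sum>j<k. e j) \<le> (\<Sum>j<n. e j * p j)"
proof -
  define t where "t = e (k - 1)"
  define q where "q j = (if j < k then 1 else (0::real))" for j
  have initial: "{..<n} \<inter> {j. j < k} = {..<k}" using kn by auto
  have eq: "(\<Sum>j<n. e j * q j) = (\<Sum>j<k. e j)"
    by (simp add: q_def if_distrib[of "\<lambda>x. e _ * x"] sum.If_cases initial cong: if_cong)
  have qk: "(\<Sum>j<n. q j) = real k"
    by (simp add: q_def sum.If_cases initial)
  have "0 \<le> (\<Sum>j<n. (e j - t) * (p j - q j))"
  proof (rule sum_nonneg)
    fix j assume j: "j \<in> {..<n}"
    show "0 \<le> (e j - t) * (p j - q j)"
    proof (cases "j < k")
      case True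
      then have "e j \<le> t" unfolding t_def using kn by (intro mono) auto
      then show ?thesis using True p1 j by (simp add: q_def mult_nonpos_nonpos)
    next
      case False
      then have "t \<le> e j" unfolding t_def using j by (intro mono) auto
      then show ?thesis using False p0 j by (simp add: q_def)
    qed
  qed
  also have "\<dots> = (\<Sum>j<n. e j * p j) - (\<Sum>j<n. e j * q j) - t * (\<Sum>j<n. p j) + t * (\<Sum>j<n. q j)"
    by (simp add: algebra_simps sum_subtractf sum.distrib sum_distrib_left)
  finally show ?thesis using eq qk ps by simp
qed

locale eigen_expansion =
  fixes n :: nat and Q :: "(nat \<Rightarrow> real) \<Rightarrow> real" and ev :: "nat \<Rightarrow> real"
    and v :: "nat \<Rightarrow> nat \<Rightarrow> real"
  assumes ev_mono: "\<And>i j. i \<le> j \<Longrightarrow> j < n \<Longrightarrow> ev i \<le> ev j"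
    and orthonormal: "orthonormal_upto n {..<n} v"
    and parseval: "\<And>y. inner_upto n y y = (\<Sum>i<n. (inner_upto n y (v i))^2)"
    and expansion: "\<And>y. Q y = (\<Sum>i<n. ev i * (inner_upto n y (v i))^2)"
begin

lemma Q_eigenvector: "j < n \<Longrightarrow> Q (v j) = ev j"
  using orthonormal by (simp add: expansion orthonormal_upto_def if_distrib[of "\<lambda>x. _ * x\<^sup>2"]
      cong: if_cong)

lemma eigenvector_unit: "j < n \<Longrightarrow> inner_upto n (v j) (v j) = 1"
  using orthonormal by (simp add: orthonormal_upto_def)

lemma sum_smallest_le_trace_frame:
  assumes fin: "finite I" and card: "card I = k" and "k \<le> n" and ortho: "orthonormal_upto n I g"
  shows "(\<Sum>l<k. ev l) \<le> (\<Sum>m\<in>I. Q (g m))"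
proof -
  define p where "p j = (\<Sum>m\<in>I. (inner_upto n (g m) (v j))^2)" for j
  have "(\<Sum>l<k. ev l) \<le> (\<Sum>j<n. ev j * p j)"
  proof (rule sum_initial_le_weighted_sum[OF \<open>k \<le> n\<close> ev_mono])
    show "0 \<le> p j" for j unfolding p_def by (auto intro: sum_nonneg)
    show "p j \<le> 1" if "j < n" for j
      using bessel_inequality[OF fin ortho, of "v j"] eigenvector_unit[OF that] by (simp add: p_def)
    have "(\<Sum>j<n. p j) = (\<Sum>m\<in>I. inner_upto n (g m) (g m))"
      unfolding p_def parseval by (rule sum.swap)
    also have "\<dots> = real k" using ortho card by (simp add: orthonormal_upto_def)
    finally show "(\<Sum>j<n. p j) = real k" .
  qed
  also have "(\<Sum>j<n. ev j * p j) = (\<Sum>m\<in>I. Q (g m))"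
    unfolding p_def expansion by (simp add: sum_distrib_left) (rule sum.swap)
  finally show ?thesis .
qed

text \<open>The first \<open>k + 1\<close> eigenvectors cannot all be close to the span of \<open>k\<close> unit vectors,
  so a Poincare inequality off that span bounds the \<open>(k + 1)\<close>-st eigenvalue from below.\<close>
lemma eigenvalue_lower_bound:
  assumes fin: "finite I" and card: "card I = k" and "k < n"
    and unit: "\<And>m. m \<in> I \<Longrightarrow> inner_upto n (g m) (g m) = 1"
    and "\<gamma> \<ge> 0" and "c \<ge> 0"
    and bound: "\<And>y. \<gamma> * (inner_upto n y y - (\<Sum>m\<in>I. (inner_upto n (g m) y)^2)) \<le> c * Q y"
  shows "\<gamma> \<le> c * (real k + 1) * ev k"
proof -
  define p where "p j = (\<Sum>m\<in>I. (inner_upto n (g m) (v j))^2)" for j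
  have each: "\<gamma> * (1 - p j) \<le> c * ev k" if "j \<le> k" for j
  proof -
    have "\<gamma> * (1 - p j) \<le> c * ev j"
      using bound[of "v j"] that \<open>k < n\<close> by (simp add: p_def eigenvector_unit Q_eigenvector)
    also have "\<dots> \<le> c * ev k" using ev_mono that \<open>k < n\<close> \<open>c \<ge> 0\<close> by (simp add: mult_left_mono)
    finally show ?thesis .
  qed
  have "(\<Sum>j\<le>k. p j) \<le> (\<Sum>j<n. p j)"
    using \<open>k < n\<close> by (intro sum_mono2) (auto simp: p_def intro: sum_nonneg)
  also have "\<dots> = (\<Sum>m\<in>I. inner_upto n (g m) (g m))"
    unfolding p_def parseval by (rule sum.swap)
  also have "\<dots> = real k" using unit card by simp
  finally have mass: "(\<Sum>j\<le>k. p j) \<le> real k" .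
  have "\<gamma> \<le> \<gamma> * ((real k + 1) - (\<Sum>j\<le>k. p j))"
    using mult_left_mono[of 1 "real k + 1 - (\<Sum>j\<le>k. p j)" \<gamma>] mass \<open>\<gamma> \<ge> 0\<close> by simp
  also have "\<dots> = (\<Sum>j\<le>k. \<gamma> * (1 - p j))"
    by (simp add: sum_subtractf sum_distrib_left right_diff_distrib)
  also have "\<dots> \<le> (\<Sum>j\<le>k. c * ev k)" by (intro sum_mono each) auto
  also have "\<dots> = c * (real k + 1) * ev k" by simp
  finally show ?thesis .
qed

end

section \<open>Dirichlet energy and a Poincare inequality\<close>

lemma normalized_laplacian_quad_form:
  fixes A :: "nat \<Rightarrow> nat \<Rightarrow> real" and d y :: "nat \<Rightarrow> real"
  assumes sym: "\<And>i j. i < n \<Longrightarrow> j < n \<Longrightarrow> A i j = A j i"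
    and deg: "\<And>i. i < n \<Longrightarrow> d i = (\<Sum>j<n. A i j)"
    and dpos: "\<And>i. i < n \<Longrightarrow> d i > 0"
  shows "quad_form n (\<lambda>i j. (if i = j then 1 else 0) - A i j / (sqrt (d i) * sqrt (d j))) y =
         (1/2) * (\<Sum>i<n. \<Sum>j<n. A i j * (y i / sqrt (d i) - y j / sqrt (d j))^2)"
proof -
  define f where "f i = y i / sqrt (d i)" for i
  have "quad_form n (\<lambda>i j. (if i = j then 1 else 0) - A i j / (sqrt (d i) * sqrt (d j))) y
      = (\<Sum>i<n. \<Sum>j<n. y i * (((if i = j then 1 else 0) - A i j / (sqrt (d i) * sqrt (d j))) * y j))"
    unfolding quad_form_def inner_upto_def mat_vec_upto_def by (simp add: sum_distrib_left)
  also have "\<dots> = (\<Sum>i<n. \<Sum>j<n. (if i = j then y i * y j else 0) - A i j * f i * f j)"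
    by (intro sum.cong refl) (auto simp: f_def field_simps)
  also have "\<dots> = (\<Sum>i<n. (y i)^2) - (\<Sum>i<n. \<Sum>j<n. A i j * f i * f j)"
    by (simp add: sum_subtractf power2_eq_square)
  finally have Q: "quad_form n (\<lambda>i j. (if i = j then 1 else 0) - A i j / (sqrt (d i) * sqrt (d j))) y
      = (\<Sum>i<n. (y i)^2) - (\<Sum>i<n. \<Sum>j<n. A i j * f i * f j)" .
  have sq: "(\<Sum>i<n. (y i)^2) = (\<Sum>i<n. \<Sum>j<n. A i j * (f i)^2)"
  proof (intro sum.cong refl)
    fix i assume "i \<in> {..<n}"
    then have "(y i)^2 = d i * (f i)^2" using dpos[of i] by (simp add: f_def power_divide less_imp_le)
    also have "\<dots> = (\<Sum>j<n. A i j * (f i)^2)" using \<open>i \<in> {..<n}\<close> by (simp add: deg sum_distrib_right)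
    finally show "(y i)^2 = (\<Sum>j<n. A i j * (f i)^2)" .
  qed
  have sq': "(\<Sum>i<n. \<Sum>j<n. A i j * (f j)^2) = (\<Sum>i<n. \<Sum>j<n. A i j * (f i)^2)"
    by (subst sum.swap) (auto intro!: sum.cong simp: sym)
  have "(\<Sum>i<n. \<Sum>j<n. A i j * (f i - f j)^2) = (\<Sum>i<n. \<Sum>j<n. A i j * (f i)^2)
      + (\<Sum>i<n. \<Sum>j<n. A i j * (f j)^2) - 2 * (\<Sum>i<n. \<Sum>j<n. A i j * f i * f j)"
    by (simp add: power2_diff algebra_simps sum.distrib sum_subtractf sum_distrib_left)
  then show ?thesis using Q sq sq' by (simp add: f_def)
qed

lemma indicator_cut_energy_le:
  fixes A :: "nat \<Rightarrow> nat \<Rightarrow> real"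
  assumes S: "S \<subseteq> {..<n}" and "w \<ge> 0"
    and cut: "\<And>i j. i \<in> S \<Longrightarrow> j < n \<Longrightarrow> j \<notin> S \<Longrightarrow> A i j \<le> w \<and> A j i \<le> w"
  shows "(\<Sum>i<n. \<Sum>j<n. A i j * (indicator S i - indicator S j)^2) \<le> 2 * real n * real (card S) * w"
proof -
  have "A i j * (indicator S i - indicator S j)^2 \<le> w * (indicator S i + indicator S j)"
    if "i < n" "j < n" for i j
    using cut[of i j] cut[of j i] that \<open>w \<ge> 0\<close>
    by (cases "i \<in> S"; cases "j \<in> S") (simp_all add: indicator_def)
  then have "(\<Sum>i<n. \<Sum>j<n. A i j * (indicator S i - indicator S j)^2)
      \<le> (\<Sum>i<n. \<Sum>j<n. w * (indicator S i + indicator S j))"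
    by (intro sum_mono) auto
  also have "\<dots> = w * (\<Sum>i<n. \<Sum>j<n. indicator S i + indicator S j)"
    by (simp only: sum_distrib_left)
  also have "(\<Sum>i<n. \<Sum>j<n. indicator S i + indicator S j) = 2 * real n * real (card S)"
  proof -
    have card: "(\<Sum>i<n. indicator S i) = real (card S)"
      using S by (simp add: indicator_def sum.inter_restrict Int_absorb1)
    then have "(\<Sum>i<n. \<Sum>j<n. indicator S i + indicator S j) = (\<Sum>i<n. real n * indicator S i + real (card S))"
      by (simp add: sum.distrib)
    also have "\<dots> = 2 * real n * real (card S)"
      using card by (simp add: sum.distrib sum_distrib_left[symmetric])
    finally show ?thesis .
  qed
  finally show ?thesis by (simp add: mult_ac)
qed

definition dirichlet_energy :: "(nat \<Rightarrow> nat \<Rightarrow> real) \<Rightarrow> (nat \<Rightarrow> real) \<Rightarrow> nat set \<Rightarrow> real" where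
  "dirichlet_energy A f R = (\<Sum>a\<in>R. \<Sum>b\<in>R. A a b * (f a - f b)^2)"

lemma dirichlet_energy_nonneg:
  "(\<And>a b. a \<in> R \<Longrightarrow> b \<in> R \<Longrightarrow> A a b \<ge> 0) \<Longrightarrow> dirichlet_energy A f R \<ge> 0"
  unfolding dirichlet_energy_def by (auto intro!: sum_nonneg)

lemma dirichlet_energy_mono:
  assumes "finite S" "R \<subseteq> S" "\<And>a b. a \<in> S \<Longrightarrow> b \<in> S \<Longrightarrow> A a b \<ge> 0"
  shows "dirichlet_energy A f R \<le> dirichlet_energy A f S"
proof -
  have "dirichlet_energy A f R \<le> (\<Sum>a\<in>R. \<Sum>b\<in>S. A a b * (f a - f b)^2)"
    unfolding dirichlet_energy_def using assms
    by (intro sum_mono sum_mono2) (auto intro: finite_subset)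
  also have "\<dots> \<le> dirichlet_energy A f S"
    unfolding dirichlet_energy_def using assms by (intro sum_mono2) (auto intro!: sum_nonneg)
  finally show ?thesis .
qed

lemma dirichlet_energy_insert:
  assumes fin: "finite R" and "b \<notin> R" and "a \<in> R"
    and nn: "\<And>x y. x \<in> insert b R \<Longrightarrow> y \<in> insert b R \<Longrightarrow> A x y \<ge> 0"
  shows "dirichlet_energy A f R + A a b * (f a - f b)^2 \<le> dirichlet_energy A f (insert b R)"
proof -
  have split: "dirichlet_energy A f (insert b R) = (\<Sum>y\<in>insert b R. A b y * (f b - f y)^2)
      + (\<Sum>x\<in>R. A x b * (f x - f b)^2) + dirichlet_energy A f R"
    unfolding dirichlet_energy_def using fin \<open>b \<notin> R\<close> by (simp add: sum.distrib)
  have "0 \<le> (\<Sum>y\<in>insert b R. A b y * (f b - f y)^2)" using nn by (auto intro!: sum_nonneg)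
  moreover have "A a b * (f a - f b)^2 \<le> (\<Sum>x\<in>R. A x b * (f x - f b)^2)"
    using fin \<open>a \<in> R\<close> nn by (intro member_le_sum) auto
  ultimately show ?thesis using split by linarith
qed

text \<open>Weighted Cauchy--Schwarz \<open>(u + v)\<^sup>2 \<le> r u\<^sup>2 + r/(r-1) v\<^sup>2\<close>, in the form needed to
  extend a path by one edge of weight at least \<open>\<gamma>\<close>.\<close>
lemma square_sum_le_weighted:
  fixes \<gamma> r u v E :: real
  assumes "\<gamma> > 0" and r: "r \<ge> 1" and hv: "\<gamma> * v^2 \<le> (r - 1) * E" and "E \<ge> 0"
    and r1: "r = 1 \<Longrightarrow> v = 0"
  shows "\<gamma> * (u + v)^2 \<le> r * (\<gamma> * u^2) + r * E"
proof (cases "r = 1")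
  case True
  then show ?thesis using r1 \<open>E \<ge> 0\<close> by simp
next
  case False
  then have r': "r - 1 > 0" using r by simp
  have "r * (\<gamma> * v^2) \<le> r * ((r - 1) * E)" using hv r by (intro mult_left_mono) auto
  then have hE: "r * \<gamma> * v^2 / (r - 1) \<le> r * E" using r' by (simp add: field_simps)
  have "0 \<le> \<gamma> * ((r - 1) * u - v)^2 / (r - 1)" using \<open>\<gamma> > 0\<close> r' by simp
  also have "\<gamma> * ((r - 1) * u - v)^2 / (r - 1) = r * (\<gamma> * u^2) + r * \<gamma> * v^2 / (r - 1) - \<gamma> * (u + v)^2"
    using r' by (simp add: field_simps power2_eq_square)
  finally show ?thesis using hE by linarith
qed

lemma path_energy_bound_insert:
  fixes A :: "nat \<Rightarrow> nat \<Rightarrow> real" and f :: "nat \<Rightarrow> real"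
  assumes fin: "finite R" and "i0 \<in> R" "a \<in> R" "b \<notin> R" and "\<gamma> > 0" and ab: "\<gamma> \<le> A a b"
    and nn: "\<And>x y. x \<in> insert b R \<Longrightarrow> y \<in> insert b R \<Longrightarrow> A x y \<ge> 0"
    and IH: "\<And>i. i \<in> R \<Longrightarrow> \<gamma> * (f i - f i0)^2 \<le> (real (card R) - 1) * dirichlet_energy A f R"
    and "i \<in> insert b R"
  shows "\<gamma> * (f i - f i0)^2 \<le> (real (card (insert b R)) - 1) * dirichlet_energy A f (insert b R)"
proof -
  define r where "r = real (card R)"
  have card: "real (card (insert b R)) - 1 = r" using fin \<open>b \<notin> R\<close> by (simp add: r_def)
  have "card R > 0" using fin \<open>a \<in> R\<close> card_gt_0_iff by blast
  then have r1: "r \<ge> 1" by (simp add: r_def)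
  have E: "dirichlet_energy A f R \<ge> 0" using nn by (intro dirichlet_energy_nonneg) auto
  have E_ins: "dirichlet_energy A f R + A a b * (f a - f b)^2 \<le> dirichlet_energy A f (insert b R)"
    using fin \<open>b \<notin> R\<close> \<open>a \<in> R\<close> nn by (rule dirichlet_energy_insert)
  show ?thesis
  proof (cases "i = b")
    case True
    have single: "f a - f i0 = 0" if "r = 1"
      using that card_1_singletonE[of R] \<open>a \<in> R\<close> \<open>i0 \<in> R\<close> by (auto simp: r_def)
    have "\<gamma> * ((f b - f a) + (f a - f i0))^2 \<le> r * (\<gamma> * (f b - f a)^2) + r * dirichlet_energy A f R"
      by (rule square_sum_le_weighted[OF \<open>\<gamma> > 0\<close> r1 _ E single])
        (use IH[OF \<open>a \<in> R\<close>] in \<open>simp add: r_def\<close>)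
    also have "\<dots> \<le> r * (A a b * (f a - f b)^2) + r * dirichlet_energy A f R"
      using ab r1 by (intro add_right_mono mult_left_mono)
        (auto simp: power2_commute intro: mult_right_mono)
    also have "\<dots> \<le> r * dirichlet_energy A f (insert b R)"
      using E_ins r1 by (simp add: distrib_left[symmetric])
    finally show ?thesis using True card by simp
  next
    case False
    then have "\<gamma> * (f i - f i0)^2 \<le> (r - 1) * dirichlet_energy A f R"
      using IH \<open>i \<in> insert b R\<close> by (simp add: r_def)
    also have "\<dots> \<le> r * dirichlet_energy A f (insert b R)"
      using E r1 dirichlet_energy_mono[of "insert b R" R A f] fin nn
      by (intro mult_mono) auto
    finally show ?thesis using card by simp
  qed
qed

text \<open>In a graph connected by edges of weight at least \<open>\<gamma>\<close>, \<open>f\<close> can deviate from its value at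
  a root only by what the Dirichlet energy allows along a path of at most \<open>|S| - 1\<close> edges.\<close>
lemma connected_deviation_le_energy:
  fixes A :: "nat \<Rightarrow> nat \<Rightarrow> real" and f :: "nat \<Rightarrow> real"
  assumes fin: "finite S" and i0: "i0 \<in> S" and "\<gamma> > 0"
    and nn: "\<And>a b. a \<in> S \<Longrightarrow> b \<in> S \<Longrightarrow> A a b \<ge> 0"
    and conn: "\<And>R. R \<subseteq> S \<Longrightarrow> R \<noteq> {} \<Longrightarrow> R \<noteq> S \<Longrightarrow> \<exists>a\<in>R. \<exists>b\<in>S - R. A a b \<ge> \<gamma>"
    and "i \<in> S"
  shows "\<gamma> * (f i - f i0)^2 \<le> (real (card S) - 1) * dirichlet_energy A f S"
proof -
  have grow: "\<exists>R \<subseteq> S. i0 \<in> R \<and> card R = Suc j \<and>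
      (\<forall>i\<in>R. \<gamma> * (f i - f i0)^2 \<le> (real (card R) - 1) * dirichlet_energy A f R)"
    if "j < card S" for j
    using that
  proof (induction j)
    case 0
    show ?case using i0 by (intro exI[of _ "{i0}"]) auto
  next
    case (Suc j)
    then obtain R where R: "R \<subseteq> S" "i0 \<in> R" "card R = Suc j"
      and IH: "\<forall>i\<in>R. \<gamma> * (f i - f i0)^2 \<le> (real (card R) - 1) * dirichlet_energy A f R"
      by auto
    have finR: "finite R" using R fin finite_subset by blast
    have "R \<noteq> {}" "R \<noteq> S" using R Suc.prems by auto
    then obtain a b where "a \<in> R" "b \<in> S - R" "A a b \<ge> \<gamma>"
      using conn[OF \<open>R \<subseteq> S\<close>] by blast
    have nn': "\<And>x y. x \<in> insert b R \<Longrightarrow> y \<in> insert b R \<Longrightarrow> A x y \<ge> 0"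
      using nn R \<open>b \<in> S - R\<close> by blast
    have "\<gamma> * (f i - f i0)^2
        \<le> (real (card (insert b R)) - 1) * dirichlet_energy A f (insert b R)"
      if "i \<in> insert b R" for i
      using \<open>b \<in> S - R\<close>
      by (intro path_energy_bound_insert[OF finR \<open>i0 \<in> R\<close> \<open>a \<in> R\<close> _ \<open>\<gamma> > 0\<close> \<open>\<gamma> \<le> A a b\<close>
            nn' IH[rule_format] that]) auto
    then show ?case using R \<open>b \<in> S - R\<close> finR by (intro exI[of _ "insert b R"]) auto
  qed
  have "card S > 0" using fin i0 card_gt_0_iff by blast
  then obtain R where "R \<subseteq> S" "card R = card S"
    and bound: "\<forall>i\<in>R. \<gamma> * (f i - f i0)^2 \<le> (real (card R) - 1) * dirichlet_energy A f R"
    using grow[of "card S - 1"] by auto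
  then have "R = S" using fin card_subset_eq by blast
  then show ?thesis using bound \<open>i \<in> S\<close> by simp
qed

lemma weighted_variance_le:
  fixes d f :: "nat \<Rightarrow> real"
  assumes "(\<Sum>i\<in>S. d i) > 0"
  shows "(\<Sum>i\<in>S. d i * (f i)^2) - (\<Sum>i\<in>S. d i * f i)^2 / (\<Sum>i\<in>S. d i) \<le> (\<Sum>i\<in>S. d i * (f i - t)^2)"
proof -
  define V where "V = (\<Sum>i\<in>S. d i)"
  define X where "X = (\<Sum>i\<in>S. d i * f i)"
  define Y where "Y = (\<Sum>i\<in>S. d i * (f i)^2)"
  have "(\<Sum>i\<in>S. d i * (f i - t)^2) = (\<Sum>i\<in>S. d i * (f i)^2 - 2 * t * (d i * f i) + t^2 * d i)"
    by (intro sum.cong) (auto simp: power2_eq_square algebra_simps)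
  also have "\<dots> = Y - 2 * t * X + t^2 * V"
    by (simp add: sum.distrib sum_subtractf sum_distrib_left X_def Y_def V_def)
  finally have expand: "(\<Sum>i\<in>S. d i * (f i - t)^2) = Y - 2 * t * X + t^2 * V" .
  have "V > 0" using assms by (simp add: V_def)
  then have "0 \<le> (X - t * V)^2 / V" by simp
  also have "(X - t * V)^2 / V = X^2 / V - 2 * t * X + t^2 * V"
    using \<open>V > 0\<close> by (simp add: field_simps power2_eq_square)
  finally show ?thesis using expand by (simp add: X_def Y_def V_def)
qed

lemma connected_poincare:
  fixes A :: "nat \<Rightarrow> nat \<Rightarrow> real" and d f :: "nat \<Rightarrow> real"
  assumes fin: "finite S" and ne: "S \<noteq> {}" and cS: "card S \<le> n" and "\<gamma> > 0"
    and dpos: "\<And>i. i \<in> S \<Longrightarrow> d i > 0" and dle: "\<And>i. i \<in> S \<Longrightarrow> d i \<le> n"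
    and nn: "\<And>a b. a \<in> S \<Longrightarrow> b \<in> S \<Longrightarrow> A a b \<ge> 0"
    and conn: "\<And>R. R \<subseteq> S \<Longrightarrow> R \<noteq> {} \<Longrightarrow> R \<noteq> S \<Longrightarrow> \<exists>a\<in>R. \<exists>b\<in>S - R. A a b \<ge> \<gamma>"
  shows "\<gamma> * ((\<Sum>i\<in>S. d i * (f i)^2) - (\<Sum>i\<in>S. d i * f i)^2 / (\<Sum>i\<in>S. d i))
           \<le> real n ^ 3 * dirichlet_energy A f S"
proof -
  obtain i0 where i0: "i0 \<in> S" using ne by blast
  let ?E = "dirichlet_energy A f S"
  have E: "?E \<ge> 0" using nn by (intro dirichlet_energy_nonneg) auto
  have c1: "1 \<le> real (card S)" using fin ne by (simp add: Suc_leI card_gt_0_iff)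
  have "\<gamma> * ((\<Sum>i\<in>S. d i * (f i)^2) - (\<Sum>i\<in>S. d i * f i)^2 / (\<Sum>i\<in>S. d i))
        \<le> \<gamma> * (\<Sum>i\<in>S. d i * (f i - f i0)^2)"
    using weighted_variance_le[where S = S and d = d and f = f and t = "f i0"] fin ne dpos \<open>\<gamma> > 0\<close>
    by (intro mult_left_mono) (auto intro!: sum_pos)
  also have "\<dots> = (\<Sum>i\<in>S. d i * (\<gamma> * (f i - f i0)^2))" by (simp add: sum_distrib_left mult_ac)
  also have "\<dots> \<le> (\<Sum>i\<in>S. real n * ((real (card S) - 1) * ?E))"
  proof (rule sum_mono, rule mult_mono)
    fix i assume "i \<in> S"
    show "\<gamma> * (f i - f i0)^2 \<le> (real (card S) - 1) * ?E"
      using connected_deviation_le_energy[OF fin i0 \<open>\<gamma> > 0\<close> nn conn \<open>i \<in> S\<close>] .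
  qed (use dle \<open>\<gamma> > 0\<close> c1 E in auto)
  also have "\<dots> = real (card S) * real n * ((real (card S) - 1) * ?E)" by simp
  also have "\<dots> \<le> real n * real n * (real n * ?E)"
    using cS c1 E by (intro mult_mono) auto
  also have "\<dots> = real n ^ 3 * ?E" by (simp add: power3_eq_cube)
  finally show ?thesis .
qed

section \<open>Normalised Laplacians of clustered affinity graphs\<close>

locale affinity_graph =
  fixes n :: nat and A :: "nat \<Rightarrow> nat \<Rightarrow> real"
  assumes A_sym: "A i j = A j i" and A_pos: "0 < A i j" and A_le_1: "A i j \<le> 1"
    and A_diag: "A i i = 1"
begin

definition deg :: "nat \<Rightarrow> real" where
  "deg i = (\<Sum>j<n. A i j)"

definition laplacian :: "nat \<Rightarrow> nat \<Rightarrow> real" where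
  "laplacian i j = (if i = j then 1 else 0) - A i j / (sqrt (deg i) * sqrt (deg j))"

lemma deg_ge_1: "i < n \<Longrightarrow> 1 \<le> deg i"
  unfolding deg_def using member_le_sum[of i "{..<n}" "A i"] A_pos A_diag by (simp add: less_imp_le)

lemma deg_pos: "i < n \<Longrightarrow> 0 < deg i"
  using deg_ge_1[of i] by linarith

lemma deg_le: "deg i \<le> real n"
  unfolding deg_def using sum_mono[of "{..<n}" "A i" "\<lambda>_. 1"] A_le_1 by simp

lemma laplacian_quad_form:
  "quad_form n laplacian y =
     (1/2) * (\<Sum>i<n. \<Sum>j<n. A i j * (y i / sqrt (deg i) - y j / sqrt (deg j))^2)"
  unfolding laplacian_def[abs_def]
proof (rule normalized_laplacian_quad_form)
  show "A i j = A j i" for i j by (rule A_sym)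
  show "deg i = (\<Sum>j<n. A i j)" for i by (rule deg_def)
  show "0 < deg i" if "i < n" for i using that by (rule deg_pos)
qed

end

locale clustered_graph = affinity_graph +
  fixes k :: nat and I :: "nat \<Rightarrow> nat set"
  assumes I_sub: "\<And>m. m \<in> {1..k} \<Longrightarrow> I m \<subseteq> {..<n}"
    and I_ne: "\<And>m. m \<in> {1..k} \<Longrightarrow> I m \<noteq> {}"
    and I_disj: "\<And>m m'. m \<in> {1..k} \<Longrightarrow> m' \<in> {1..k} \<Longrightarrow> m \<noteq> m' \<Longrightarrow> I m \<inter> I m' = {}"
    and I_cover: "{..<n} \<subseteq> (\<Union>m\<in>{1..k}. I m)"
begin

definition vol :: "nat \<Rightarrow> real" where
  "vol m = (\<Sum>i\<in>I m. deg i)"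

definition cluster_vec :: "nat \<Rightarrow> nat \<Rightarrow> real" where
  "cluster_vec m i = (if i \<in> I m then sqrt (deg i) / sqrt (vol m) else 0)"

lemma finite_cluster: "m \<in> {1..k} \<Longrightarrow> finite (I m)"
  using I_sub finite_subset by blast

lemma card_cluster_le: "m \<in> {1..k} \<Longrightarrow> card (I m) \<le> n"
  using card_mono[OF _ I_sub] by fastforce

lemma deg_pos_cluster: "m \<in> {1..k} \<Longrightarrow> i \<in> I m \<Longrightarrow> 0 < deg i"
  using I_sub deg_pos by blast

lemma sum_clusters: "(\<Sum>m\<in>{1..k}. \<Sum>i\<in>I m. h i) = (\<Sum>i<n. h i)"
proof -
  have "(\<Union>m\<in>{1..k}. I m) = {..<n}" using I_sub I_cover by blast
  then have "(\<Sum>i<n. h i) = (\<Sum>i\<in>(\<Union>m\<in>{1..k}. I m). h i)" by simp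
  also have "\<dots> = (\<Sum>m\<in>{1..k}. \<Sum>i\<in>I m. h i)"
    by (rule sum.UNION_disjoint) (auto simp: finite_cluster I_disj)
  finally show ?thesis by simp
qed

lemma card_le_vol: "m \<in> {1..k} \<Longrightarrow> real (card (I m)) \<le> vol m"
  unfolding vol_def using sum_mono[of "I m" "\<lambda>_. 1" deg] deg_ge_1 I_sub by force

lemma vol_pos: "m \<in> {1..k} \<Longrightarrow> 0 < vol m"
  using card_le_vol[of m] finite_cluster[of m] I_ne[of m] card_gt_0_iff[of "I m"] by linarith

lemma inner_cluster_vec:
  assumes m: "m \<in> {1..k}"
  shows "inner_upto n (cluster_vec m) y = (\<Sum>i\<in>I m. sqrt (deg i) * y i) / sqrt (vol m)"
proof -
  have "inner_upto n (cluster_vec m) y = (\<Sum>i<n. if i \<in> I m then sqrt (deg i) * y i / sqrt (vol m) else 0)"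
    unfolding inner_upto_def cluster_vec_def by (intro sum.cong) auto
  also have "\<dots> = (\<Sum>i\<in>I m. sqrt (deg i) * y i / sqrt (vol m))"
    using I_sub[OF m] by (simp add: sum.If_cases Int_absorb1 Int_absorb2)
  finally show ?thesis by (simp add: sum_divide_distrib)
qed

lemma cluster_vec_orthonormal: "orthonormal_upto n {1..k} cluster_vec"
  unfolding orthonormal_upto_def
proof (intro ballI)
  fix m m' assume m: "m \<in> {1..k}" and m': "m' \<in> {1..k}"
  have "(\<Sum>i\<in>I m. sqrt (deg i) * cluster_vec m' i) = (if m = m' then vol m / sqrt (vol m) else 0)"
  proof (cases "m = m'")
    case True
    then show ?thesis
      using deg_pos_cluster[OF m] vol_pos[OF m]
      by (simp add: cluster_vec_def vol_def sum_divide_distrib less_imp_le)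
  next
    case False
    then show ?thesis using I_disj[OF m m'] by (auto simp: cluster_vec_def intro!: sum.neutral)
  qed
  then show "inner_upto n (cluster_vec m) (cluster_vec m') = (if m = m' then 1 else 0)"
    using vol_pos[OF m] vol_pos[OF m'] by (auto simp: inner_cluster_vec[OF m] real_div_sqrt less_imp_le)
qed

lemma quad_form_cluster_vec_le:
  assumes m: "m \<in> {1..k}" and "w \<ge> 0"
    and cut: "\<And>i j. i \<in> I m \<Longrightarrow> j < n \<Longrightarrow> j \<notin> I m \<Longrightarrow> A i j \<le> w"
  shows "quad_form n laplacian (cluster_vec m) \<le> real n * w"
proof -
  let ?\<chi> = "indicator (I m) :: nat \<Rightarrow> real"
  have "cluster_vec m i / sqrt (deg i) = ?\<chi> i / sqrt (vol m)" if "i < n" for i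
    using deg_pos[OF that] by (simp add: cluster_vec_def indicator_def)
  then have "quad_form n laplacian (cluster_vec m)
      = (1/2) * (\<Sum>i<n. \<Sum>j<n. A i j * ((?\<chi> i - ?\<chi> j) / sqrt (vol m))^2)"
    unfolding laplacian_quad_form by (simp add: diff_divide_distrib)
  also have "\<dots> = (\<Sum>i<n. \<Sum>j<n. A i j * (?\<chi> i - ?\<chi> j)^2) / (2 * vol m)"
    using vol_pos[OF m] by (simp add: power_divide sum_divide_distrib mult_ac)
  also have "\<dots> \<le> (2 * real n * real (card (I m)) * w) / (2 * vol m)"
    using indicator_cut_energy_le[OF I_sub[OF m] \<open>w \<ge> 0\<close>] cut A_sym vol_pos[OF m]
    by (intro divide_right_mono) auto
  also have "\<dots> = real n * w * (real (card (I m)) / vol m)" by simp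
  also have "\<dots> \<le> real n * w"
    using card_le_vol[OF m] vol_pos[OF m] \<open>w \<ge> 0\<close>
    by (intro mult_left_le) (auto simp: divide_le_eq)
  finally show ?thesis .
qed

lemma cluster_variance_le_energy:
  assumes m: "m \<in> {1..k}" and "\<gamma> > 0"
    and conn: "\<And>R. R \<subseteq> I m \<Longrightarrow> R \<noteq> {} \<Longrightarrow> R \<noteq> I m \<Longrightarrow> \<exists>a\<in>R. \<exists>b\<in>I m - R. \<gamma> \<le> A a b"
  shows "\<gamma> * ((\<Sum>i\<in>I m. (y i)^2) - (inner_upto n (cluster_vec m) y)^2)
           \<le> real n ^ 3 * dirichlet_energy A (\<lambda>i. y i / sqrt (deg i)) (I m)"
proof -
  have sq: "deg i * (y i / sqrt (deg i))^2 = (y i)^2"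
    and lin: "deg i * (y i / sqrt (deg i)) = sqrt (deg i) * y i" if "i \<in> I m" for i
    using deg_pos_cluster[OF m that] by (simp_all add: power_divide field_simps)
  have "(\<Sum>i\<in>I m. deg i * (y i / sqrt (deg i))^2) = (\<Sum>i\<in>I m. (y i)^2)"
    using sq by (intro sum.cong) auto
  moreover have "(\<Sum>i\<in>I m. deg i * (y i / sqrt (deg i))) = (\<Sum>i\<in>I m. sqrt (deg i) * y i)"
    using lin by (intro sum.cong) auto
  moreover have "(inner_upto n (cluster_vec m) y)^2 = (\<Sum>i\<in>I m. sqrt (deg i) * y i)^2 / vol m"
    using vol_pos[OF m] by (simp add: inner_cluster_vec[OF m] power_divide)
  moreover have "\<gamma> * ((\<Sum>i\<in>I m. deg i * (y i / sqrt (deg i))^2)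
        - (\<Sum>i\<in>I m. deg i * (y i / sqrt (deg i)))^2 / (\<Sum>i\<in>I m. deg i))
      \<le> real n ^ 3 * dirichlet_energy A (\<lambda>i. y i / sqrt (deg i)) (I m)"
    by (rule connected_poincare[OF finite_cluster[OF m] I_ne[OF m] card_cluster_le[OF m] \<open>\<gamma> > 0\<close>])
      (auto intro: deg_pos_cluster[OF m] deg_le less_imp_le[OF A_pos] conn)
  ultimately show ?thesis by (simp add: vol_def)
qed

lemma cluster_poincare:
  assumes "\<gamma> > 0"
    and conn: "\<And>m R. m \<in> {1..k} \<Longrightarrow> R \<subseteq> I m \<Longrightarrow> R \<noteq> {} \<Longrightarrow> R \<noteq> I m \<Longrightarrow>
                 \<exists>a\<in>R. \<exists>b\<in>I m - R. \<gamma> \<le> A a b"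
  shows "\<gamma> * (inner_upto n y y - (\<Sum>m\<in>{1..k}. (inner_upto n (cluster_vec m) y)^2))
           \<le> 2 * real n ^ 3 * quad_form n laplacian y"
proof -
  define f where "f i = y i / sqrt (deg i)" for i
  have "\<gamma> * (inner_upto n y y - (\<Sum>m\<in>{1..k}. (inner_upto n (cluster_vec m) y)^2))
      = (\<Sum>m\<in>{1..k}. \<gamma> * ((\<Sum>i\<in>I m. (y i)^2) - (inner_upto n (cluster_vec m) y)^2))"
    by (simp add: inner_upto_def sum_clusters[symmetric] power2_eq_square sum_subtractf
        sum_distrib_left right_diff_distrib)
  also have "\<dots> \<le> (\<Sum>m\<in>{1..k}. real n ^ 3 * dirichlet_energy A f (I m))"
    unfolding f_def using cluster_variance_le_energy[OF _ \<open>\<gamma> > 0\<close> conn] by (intro sum_mono) auto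
  also have "\<dots> \<le> (\<Sum>m\<in>{1..k}. real n ^ 3 * (\<Sum>a\<in>I m. \<Sum>b<n. A a b * (f a - f b)^2))"
    unfolding dirichlet_energy_def using I_sub A_pos
    by (intro sum_mono mult_left_mono sum_mono2) (auto simp: less_imp_le)
  also have "\<dots> = real n ^ 3 * (\<Sum>a<n. \<Sum>b<n. A a b * (f a - f b)^2)"
    by (simp only: sum_distrib_left[symmetric] sum_clusters)
  also have "\<dots> = 2 * real n ^ 3 * quad_form n laplacian y"
    by (simp add: laplacian_quad_form f_def)
  finally show ?thesis .
qed

end

section \<open>Kernel graphs on clustered point sets\<close>

lemma set_dist_nonneg: "set_dist S U \<ge> 0"
  unfolding set_dist_def by (rule INF_greatest) simp

lemma set_dist_le: "a \<in> S \<Longrightarrow> b \<in> U \<Longrightarrow> set_dist S U \<le> ereal (norm (a - b))"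
  unfolding set_dist_def by (rule INF_lower2[of "(a, b)"]) auto

lemma set_dist_attained:
  assumes "finite S" "finite U" "S \<noteq> {}" "U \<noteq> {}"
  obtains a b where "a \<in> S" "b \<in> U" "set_dist S U = ereal (norm (a - b))"
proof -
  define g where "g p = ereal (norm (fst p - snd p))" for p :: "'a \<times> 'a"
  have fin: "finite (g ` (S \<times> U))" "g ` (S \<times> U) \<noteq> {}" using assms by auto
  have "set_dist S U = Min (g ` (S \<times> U))"
    unfolding set_dist_def g_def[abs_def] using cInf_eq_Min[OF fin[unfolded g_def[abs_def]]] by simp
  then have "set_dist S U \<in> g ` (S \<times> U)" using Min_in[OF fin] by simp
  then obtain a b where "a \<in> S" "b \<in> U" "set_dist S U = g (a, b)" by auto
  then show ?thesis using that by (simp add: g_def)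
qed

lemma Ksig_set_dist_nonneg:
  assumes Kpos: "\<And>t. t \<ge> 0 \<Longrightarrow> K t > 0" and "\<sigma> > 0"
  shows "Ksig K \<sigma> (set_dist S U) \<ge> 0"
proof (cases "set_dist S U = \<infinity>")
  case True
  have "0 \<le> (INF t\<in>{0::real..}. K t)"
    by (rule cINF_greatest) (auto intro: less_imp_le Kpos)
  then show ?thesis using True by (simp add: Ksig_def)
next
  case False
  then obtain r where r: "set_dist S U = ereal r" "r \<ge> 0"
    using set_dist_nonneg[of S U] by (cases "set_dist S U") auto
  then show ?thesis using Kpos[of "r / \<sigma>"] \<open>\<sigma> > 0\<close> by (simp add: Ksig_def less_imp_le)
qed

lemma kernel_le_Ksig_set_dist:
  assumes Kmono: "\<And>s t. 0 \<le> s \<Longrightarrow> s \<le> t \<Longrightarrow> K t \<le> K s" and "\<sigma> > 0"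
    and "a \<in> S" "b \<in> U"
  shows "K (norm (a - b) / \<sigma>) \<le> Ksig K \<sigma> (set_dist S U)"
proof -
  obtain r where r: "set_dist S U = ereal r" "0 \<le> r" "r \<le> norm (a - b)"
    using set_dist_le[OF \<open>a \<in> S\<close> \<open>b \<in> U\<close>] set_dist_nonneg[of S U]
    by (cases "set_dist S U") auto
  then show ?thesis
    using Kmono[of "r / \<sigma>" "norm (a - b) / \<sigma>"] \<open>\<sigma> > 0\<close>
    by (simp add: Ksig_def divide_right_mono)
qed

lemma connected_at_dist_close_pair:
  assumes conn: "connected_at_dist (x ` J) \<delta>" and inj: "inj_on x J" and "finite J"
    and R: "R \<subseteq> J" "R \<noteq> {}" "R \<noteq> J"
  obtains a b where "a \<in> R" "b \<in> J - R" "norm (x a - x b) \<le> \<delta>"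
proof -
  have union: "x ` R \<union> x ` (J - R) = x ` J"
    using R(1) by (simp add: image_Un[symmetric] Un_absorb1)
  have disj: "x ` R \<inter> x ` (J - R) = {}"
    using inj_on_image_Int[OF inj R(1), of "J - R"] by simp
  have ne: "x ` R \<noteq> {}" "x ` (J - R) \<noteq> {}" using R by auto
  have close: "set_dist (x ` R) (x ` (J - R)) \<le> ereal \<delta>"
  proof (rule ccontr)
    assume "\<not> ?thesis"
    then have "set_dist (x ` R) (x ` (J - R)) > ereal \<delta>" by simp
    with ne union disj have "\<exists>S1 S2. S1 \<noteq> {} \<and> S2 \<noteq> {} \<and> S1 \<union> S2 = x ` J \<and> S1 \<inter> S2 = {}
        \<and> set_dist S1 S2 > ereal \<delta>"
      by (intro exI[of _ "x ` R"] exI[of _ "x ` (J - R)"] conjI) assumption+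
    with conn[unfolded connected_at_dist_def] show False by (rule notE)
  qed
  have "finite (x ` R)" "finite (x ` (J - R))" using \<open>finite J\<close> R(1) finite_subset by auto
  then obtain a' b' where "a' \<in> x ` R" "b' \<in> x ` (J - R)"
    and dist: "set_dist (x ` R) (x ` (J - R)) = ereal (norm (a' - b'))"
    using set_dist_attained[OF _ _ ne] by metis
  then obtain a b where "a \<in> R" "b \<in> J - R" "a' = x a" "b' = x b" by blast
  then show ?thesis using that close dist by simp
qed

locale kernel_clustering =
  fixes K :: "real \<Rightarrow> real" and \<sigma> :: real and n k :: nat
    and x :: "nat \<Rightarrow> 'a::real_normed_vector" and C :: "nat \<Rightarrow> 'a set" and \<delta> :: "nat \<Rightarrow> real"
  assumes Kpos: "\<And>t. t \<ge> 0 \<Longrightarrow> K t > 0"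
    and Kmono: "\<And>s t. 0 \<le> s \<Longrightarrow> s \<le> t \<Longrightarrow> K t \<le> K s"
    and K0: "K 0 = 1"
    and sigma: "\<sigma> > 0"
    and inj: "inj_on x {..<n}"
    and nk: "n \<ge> k + 1"
    and Cne: "\<And>l. l \<in> {1..k} \<Longrightarrow> C l \<noteq> {}"
    and Cdisj: "\<And>l m. l \<in> {1..k} \<Longrightarrow> m \<in> {1..k} \<Longrightarrow> l \<noteq> m \<Longrightarrow> C l \<inter> C m = {}"
    and Cunion: "(\<Union>l\<in>{1..k}. C l) = x ` {..<n}"
    and delta_nonneg: "\<And>l. l \<in> {1..k} \<Longrightarrow> \<delta> l \<ge> 0"
    and Cconn: "\<And>l. l \<in> {1..k} \<Longrightarrow> connected_at_dist (C l) (\<delta> l)"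
begin

definition kernel_affinity :: "nat \<Rightarrow> nat \<Rightarrow> real" where
  "kernel_affinity i j = K (norm (x i - x j) / \<sigma>)"

definition cluster :: "nat \<Rightarrow> nat set" where
  "cluster m = {i. i < n \<and> x i \<in> C m}"

definition cut_weight :: "nat \<Rightarrow> real" where
  "cut_weight m = Ksig K \<sigma> (set_dist (C m) (x ` {..<n} - C m))"

lemma k_ge_1: "k \<ge> 1"
proof (rule ccontr)
  assume "\<not> k \<ge> 1"
  then have "x ` {..<n} = {}" using Cunion by simp
  then show False using nk by (simp add: lessThan_empty_iff)
qed

lemma C_eq_image_cluster: "m \<in> {1..k} \<Longrightarrow> C m = x ` cluster m"
  using Cunion by (auto simp: cluster_def)

sublocale clustered_graph n kernel_affinity k cluster
proof
  show "kernel_affinity i j = kernel_affinity j i" for i j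
    by (simp add: kernel_affinity_def norm_minus_commute)
  show "0 < kernel_affinity i j" for i j
    using Kpos sigma by (simp add: kernel_affinity_def)
  show "kernel_affinity i j \<le> 1" for i j
    using Kmono[of 0 "norm (x i - x j) / \<sigma>"] K0 sigma by (simp add: kernel_affinity_def)
  show "kernel_affinity i i = 1" for i
    using K0 by (simp add: kernel_affinity_def)
  show "cluster m \<subseteq> {..<n}" for m
    by (auto simp: cluster_def)
  show "cluster m \<noteq> {}" if "m \<in> {1..k}" for m
    using Cne[OF that] C_eq_image_cluster[OF that] by auto
  show "cluster m \<inter> cluster m' = {}" if "m \<in> {1..k}" "m' \<in> {1..k}" "m \<noteq> m'" for m m'
    using Cdisj[OF that] by (auto simp: cluster_def)
  show "{..<n} \<subseteq> (\<Union>m\<in>{1..k}. cluster m)"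
    using Cunion by (auto simp: cluster_def)
qed

lemma norm_laplacian_entry:
  "i < n \<Longrightarrow> j < n \<Longrightarrow> norm_laplacian K \<sigma> n x $$ (i,j) = laplacian i j"
  by (simp add: norm_laplacian_def laplacian_def deg_def degree_def affinity_def kernel_affinity_def)

lemma eigen_expansion_norm_laplacian:
  assumes "sorted_eigenvalues (norm_laplacian K \<sigma> n x) e"
  obtains v where "eigen_expansion n (quad_form n laplacian) (\<lambda>i. e ! i) v"
proof -
  let ?M = "norm_laplacian K \<sigma> n x"
  have M: "?M \<in> carrier_mat n n" unfolding norm_laplacian_def carrier_mat_def by simp
  from assms have "sorted e" "length e = n" and cp: "char_poly ?M = (\<Prod>a\<leftarrow>e. [:- a, 1:])"
    unfolding sorted_eigenvalues_def using M by auto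
  then have mono: "e ! i \<le> e ! j" if "i \<le> j" "j < n" for i j
    using that by (simp add: sorted_nth_mono)
  have "?M $$ (i,j) = ?M $$ (j,i)" if "i < n" "j < n" for i j
    using that by (simp add: norm_laplacian_entry laplacian_def A_sym mult.commute)
  then obtain v where "orthonormal_upto n {..<n} v"
    and "\<And>y. inner_upto n y y = (\<Sum>i<n. (inner_upto n y (v i))^2)"
    and "\<And>y. quad_form n (\<lambda>i j. ?M $$ (i,j)) y = (\<Sum>i<n. e ! i * (inner_upto n y (v i))^2)"
    using symmetric_mat_orthonormal_eigenbasis[OF M _ cp] by blast
  moreover have "quad_form n (\<lambda>i j. ?M $$ (i,j)) y = quad_form n laplacian y" for y
    by (rule quad_form_cong) (simp add: norm_laplacian_entry)
  ultimately show ?thesis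
    using mono by (intro that) (unfold_locales, auto)
qed

lemma cut_weight_nonneg: "0 \<le> cut_weight m"
  unfolding cut_weight_def by (rule Ksig_set_dist_nonneg[where K = K, OF Kpos sigma])

lemma kernel_affinity_le_cut_weight:
  "m \<in> {1..k} \<Longrightarrow> i \<in> cluster m \<Longrightarrow> j < n \<Longrightarrow> j \<notin> cluster m \<Longrightarrow> kernel_affinity i j \<le> cut_weight m"
  unfolding kernel_affinity_def cut_weight_def
  by (rule kernel_le_Ksig_set_dist[where K = K, OF Kmono sigma]) (auto simp: cluster_def)

lemma sum_smallest_eigenvalues_le:
  assumes "sorted_eigenvalues (norm_laplacian K \<sigma> n x) e"
  shows "(\<Sum>l<k. e ! l) \<le> real n * real k * (MAX m\<in>{1..k}. cut_weight m)"
proof -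
  obtain v where "eigen_expansion n (quad_form n laplacian) (\<lambda>i. e ! i) v"
    using eigen_expansion_norm_laplacian[OF assms] .
  then interpret eigen_expansion n "quad_form n laplacian" "\<lambda>i. e ! i" v .
  have "(\<Sum>l<k. e ! l) \<le> (\<Sum>m\<in>{1..k}. quad_form n laplacian (cluster_vec m))"
    using nk by (intro sum_smallest_le_trace_frame cluster_vec_orthonormal) auto
  also have "\<dots> \<le> (\<Sum>m\<in>{1..k}. real n * (MAX m\<in>{1..k}. cut_weight m))"
  proof (rule sum_mono)
    fix m assume m: "m \<in> {1..k}"
    have "quad_form n laplacian (cluster_vec m) \<le> real n * cut_weight m"
      using cut_weight_nonneg kernel_affinity_le_cut_weight[OF m]
      by (rule quad_form_cluster_vec_le[OF m])
    also have "\<dots> \<le> real n * (MAX m\<in>{1..k}. cut_weight m)"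
      using m by (intro mult_left_mono Max_ge) auto
    finally show "quad_form n laplacian (cluster_vec m) \<le> real n * (MAX m\<in>{1..k}. cut_weight m)" .
  qed
  also have "\<dots> = real n * real k * (MAX m\<in>{1..k}. cut_weight m)" by simp
  finally show ?thesis .
qed

lemma cluster_link:
  assumes m: "m \<in> {1..k}" and R: "R \<subseteq> cluster m" "R \<noteq> {}" "R \<noteq> cluster m"
  shows "\<exists>a\<in>R. \<exists>b\<in>cluster m - R. K (\<delta> m / \<sigma>) \<le> kernel_affinity a b"
proof -
  have "inj_on x (cluster m)" by (rule inj_on_subset[OF inj]) (auto simp: cluster_def)
  then obtain a b where "a \<in> R" "b \<in> cluster m - R" "norm (x a - x b) \<le> \<delta> m"
    using connected_at_dist_close_pair[OF Cconn[OF m, unfolded C_eq_image_cluster[OF m]]]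
      finite_cluster[OF m] R by metis
  then show ?thesis
    using Kmono[of "norm (x a - x b) / \<sigma>" "\<delta> m / \<sigma>"] sigma
    by (auto simp: kernel_affinity_def divide_right_mono)
qed

lemma kernel_delta_min_attained:
  obtains l0 where "l0 \<in> {1..k}" "K (\<delta> l0 / \<sigma>) = (MIN l\<in>{1..k}. K (\<delta> l / \<sigma>))"
proof -
  have "(MIN l\<in>{1..k}. K (\<delta> l / \<sigma>)) \<in> (\<lambda>l. K (\<delta> l / \<sigma>)) ` {1..k}"
    using k_ge_1 by (intro Min_in) auto
  then show ?thesis using that by auto
qed

lemma eigenvalue_k_lower_bound:
  assumes "sorted_eigenvalues (norm_laplacian K \<sigma> n x) e"
  shows "(MIN l\<in>{1..k}. K (\<delta> l / \<sigma>)) \<le> 2 * real n ^ 3 * (real k + 1) * e ! k"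
proof -
  define \<gamma> where "\<gamma> = (MIN l\<in>{1..k}. K (\<delta> l / \<sigma>))"
  have \<gamma>_le: "\<gamma> \<le> K (\<delta> m / \<sigma>)" if "m \<in> {1..k}" for m
    using that by (simp add: \<gamma>_def)
  obtain l0 where "l0 \<in> {1..k}" "K (\<delta> l0 / \<sigma>) = \<gamma>"
    unfolding \<gamma>_def by (rule kernel_delta_min_attained)
  then have "\<gamma> > 0" using Kpos delta_nonneg sigma by force
  obtain v where "eigen_expansion n (quad_form n laplacian) (\<lambda>i. e ! i) v"
    using eigen_expansion_norm_laplacian[OF assms] .
  then interpret eigen_expansion n "quad_form n laplacian" "\<lambda>i. e ! i" v .
  have "\<gamma> \<le> (2 * real n ^ 3) * (real k + 1) * e ! k"
  proof (rule eigenvalue_lower_bound[where I = "{1..k}" and g = cluster_vec])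
    show "inner_upto n (cluster_vec m) (cluster_vec m) = 1" if "m \<in> {1..k}" for m
      using cluster_vec_orthonormal that by (simp add: orthonormal_upto_def)
    show "\<gamma> * (inner_upto n y y - (\<Sum>m\<in>{1..k}. (inner_upto n (cluster_vec m) y)^2))
        \<le> 2 * real n ^ 3 * quad_form n laplacian y" for y
      using cluster_link \<gamma>_le by (intro cluster_poincare[OF \<open>\<gamma> > 0\<close>]) (meson order_trans)
  qed (use nk \<open>\<gamma> > 0\<close> in auto)
  then show ?thesis by (simp add: \<gamma>_def)
qed

lemma eigenvalue_k_ge:
  assumes "sorted_eigenvalues (norm_laplacian K \<sigma> n x) e"
  shows "(MIN (l, m)\<in>{1..k} \<times> {1..k}.
           K (\<delta> l / \<sigma>) / (9 * real n ^ 3 * (real k + 1) ^ 4) - real n ^ 3 * real k * cut_weight m)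
         \<le> e ! k"
proof -
  obtain l0 where l0: "l0 \<in> {1..k}" "K (\<delta> l0 / \<sigma>) = (MIN l\<in>{1..k}. K (\<delta> l / \<sigma>))"
    by (rule kernel_delta_min_attained)
  let ?\<gamma> = "K (\<delta> l0 / \<sigma>)"
  have "?\<gamma> \<ge> 0" using Kpos delta_nonneg[OF l0(1)] sigma by (simp add: less_imp_le)
  have n: "real n > 0" using nk by simp
  have "(MIN (l, m)\<in>{1..k} \<times> {1..k}.
           K (\<delta> l / \<sigma>) / (9 * real n ^ 3 * (real k + 1) ^ 4) - real n ^ 3 * real k * cut_weight m)
        \<le> ?\<gamma> / (9 * real n ^ 3 * (real k + 1) ^ 4) - real n ^ 3 * real k * cut_weight 1"
    using l0(1) k_ge_1 by (intro Min_le) auto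
  also have "\<dots> \<le> ?\<gamma> / (9 * real n ^ 3 * (real k + 1) ^ 4)"
    using mult_nonneg_nonneg[OF _ cut_weight_nonneg, of "real n ^ 3 * real k" 1] by simp
  also have "\<dots> \<le> ?\<gamma> / (2 * real n ^ 3 * (real k + 1))"
    using \<open>?\<gamma> \<ge> 0\<close> n self_le_power[of "real k + 1" 4]
    by (intro divide_left_mono) (auto intro: mult_left_mono)
  also have "\<dots> \<le> e ! k"
    using eigenvalue_k_lower_bound[OF assms] l0(2) n by (simp add: divide_le_eq mult.commute)
  finally show ?thesis .
qed

end

theorem lemma10:
  fixes K :: "real \<Rightarrow> real" and \<sigma> :: real and n k :: nat
    and x :: "nat \<Rightarrow> 'a::euclidean_space" and C :: "nat \<Rightarrow> 'a set"
    and \<delta> :: "nat \<Rightarrow> real" and e :: "real list"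
  assumes Kpos: "\<And>t. t \<ge> 0 \<Longrightarrow> K t > 0"
    and Kmono: "\<And>s t. 0 \<le> s \<Longrightarrow> s \<le> t \<Longrightarrow> K t \<le> K s"
    and K0: "K 0 = 1"
    and sigma: "\<sigma> > 0"
    and inj: "inj_on x {..<n}"
    and nk: "n \<ge> k + 1"
    and Cne: "\<And>l. l \<in> {1..k} \<Longrightarrow> C l \<noteq> {}"
    and Cdisj: "\<And>l m. l \<in> {1..k} \<Longrightarrow> m \<in> {1..k} \<Longrightarrow> l \<noteq> m \<Longrightarrow> C l \<inter> C m = {}"
    and Cunion: "(\<Union>l\<in>{1..k}. C l) = x ` {..<n}"
    and delta_nonneg: "\<And>l. l \<in> {1..k} \<Longrightarrow> \<delta> l \<ge> 0"
    and Cconn: "\<And>l. l \<in> {1..k} \<Longrightarrow> connected_at_dist (C l) (\<delta> l)"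
    and eig: "sorted_eigenvalues (norm_laplacian K \<sigma> n x) e"
  shows "(\<Sum>l<k. e ! l) \<le> real n * real k *
           (MAX m\<in>{1..k}. Ksig K \<sigma> (set_dist (C m) (x ` {..<n} - C m))) \<and>
         e ! k \<ge> (MIN (l, m)\<in>{1..k} \<times> {1..k}.
           K (\<delta> l / \<sigma>) / (9 * real n ^ 3 * (real k + 1) ^ 4)
           - real n ^ 3 * real k * Ksig K \<sigma> (set_dist (C m) (x ` {..<n} - C m)))"
proof -
  interpret kernel_clustering K \<sigma> n k x C \<delta>
    using Kpos Kmono K0 sigma inj nk Cne Cdisj Cunion delta_nonneg Cconn by unfold_locales
  show ?thesis
    using sum_smallest_eigenvalues_le[OF eig] eigenvalue_k_ge[OF eig]
    unfolding cut_weight_def by (rule conjI)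
qed

end
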